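(* Let $\sigma$ be a Borel measure on $\mathbb{R}\setminus\{0\}$ whose support is invariant under $\beta\mapsto\beta^{-1}$ and on which $|\beta|$ and $|\beta|^{-1}$ are bounded, and let $\mu$ be the measure on $X=(\mathbb{R}\setminus\{0\})\cup\mathbb{T}$ (where $\mathbb{T}=\{|\beta|=1\}\subset\mathbb{C}$) equal to $\sigma$ on the real line and to $d\theta/\pi$ on $\mathbb{T}$ (parametrized by $e^{i\theta}$). Let $\rho$ be a function on $\operatorname{supp}\sigma\cup\mathbb{T}$ and $\hat r$ a function on $\mathbb{T}$, and let $s(\alpha)=1$ for $|\alpha|>1$, $s(\alpha)=-1$ for $|\alpha|<1$. Let $C_2$ be the operator on $H=L^2(X,\mu)$ given by $$(C_2u)(\beta)=\frac{\beta}{|\beta|}\,\rho(\beta)\,u(\beta^{-1})+\mathrm{v.p.}\int_{-\infty}^{\infty}\frac{u(\alpha)\,s(\alpha)}{1-\beta^{-1}\alpha^{-1}}\,d\sigma(\alpha)+\frac1\pi\,\mathrm{v.p.}\int_{-\pi}^{\pi}\frac{\hat r(e^{i\theta})\,u(e^{i\theta})}{1-\beta^{-1}e^{-i\theta}}\,d\theta,$$ and assume $C_2$ is a well-defined bounded operator on $H$. For $k\in\mathbb{Z}$, $t\in\mathbb{R}$ put $$\Gamma(k,t)=M_{\beta^{k+2}e^{\beta t}}+M_{\beta^{-k}e^{\beta^{-1}t}}\,C_2,$$ where $M_f$ denotes multiplication by the function $f(\beta)$, and assume that every $\Gamma(k,t)$ is invertible with bounded inverse. Let $\gamma(k,t)=\Gamma(k,t)^{-1}\partial_t\Gamma(k,t)$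 (derivatives in $t$ taken in operator norm). Then each $\gamma(k,t)$ is invertible and $$\partial_t\bigl(\gamma(k,t)^{-1}\partial_t\gamma(k,t)\bigr)=\gamma(k,t)^{-1}\gamma(k+1,t)-\gamma(k-1,t)^{-1}\gamma(k,t)\qquad\text{for all }k\in\mathbb{Z},\ t\in\mathbb{R}.$$
   Context: In the paper the measure $\sigma$ and the functions $\rho=m/(2q(\beta^{-1}))$ and $\hat r$ are the "reduced spectral data" of a Jacobi matrix, but the paper states explicitly that the considerations of this section hold for arbitrary such data provided the operators $\Gamma(k,t)$ are invertible; this is the generality stated here. "v.p." denotes the Cauchy principal value integral. *)

theory Defs
  imports "HOL-Analysis.Analysis"
begin

text \<open>X = (R minus 0) union T is viewed as a subset of the complex plane; functions on X
  are represented by functions complex => complex (values off X are irrelevant since mu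
  is concentrated on X). Operators on H are represented by maps on representatives.\<close>

definition supp_meas :: "real measure \<Rightarrow> real set" where
  "supp_meas \<sigma> = {x. \<forall>e>0. emeasure \<sigma> (ball x e) > 0}"

definition circle :: "complex set" where
  "circle = {z. cmod z = 1}"

definition mu_meas :: "real measure \<Rightarrow> complex measure" where
  "mu_meas \<sigma> = measure_of UNIV (sets borel)
     (\<lambda>A. emeasure \<sigma> (complex_of_real -` A)
          + emeasure lborel {\<theta> \<in> {-pi..pi}. cis \<theta> \<in> A} / ennreal pi)"

definition L2 :: "complex measure \<Rightarrow> (complex \<Rightarrow> complex) set" where
  "L2 \<mu> = {u. u \<in> borel_measurable \<mu> \<and> (\<integral>\<^sup>+ x. ennreal ((cmod (u x))\<^sup>2) \<partial>\<mu>) < \<infinity>}"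

definition l2n :: "complex measure \<Rightarrow> (complex \<Rightarrow> complex) \<Rightarrow> ennreal" where
  "l2n \<mu> u = (\<integral>\<^sup>+ x. ennreal ((cmod (u x))\<^sup>2) \<partial>\<mu>)"

type_synonym op = "(complex \<Rightarrow> complex) \<Rightarrow> (complex \<Rightarrow> complex)"

text \<open>A well-defined bounded (linear) operator on H: maps L^2 to L^2, linear modulo
  null sets, bounded. (Compatibility with a.e. equality follows from these.)\<close>
definition bounded_op :: "complex measure \<Rightarrow> op \<Rightarrow> bool" where
  "bounded_op \<mu> T \<longleftrightarrow>
     (\<forall>u\<in>L2 \<mu>. T u \<in> L2 \<mu>) \<and>
     (\<forall>u\<in>L2 \<mu>. \<forall>v\<in>L2 \<mu>. \<forall>c::complex.
        AE x in \<mu>. T (\<lambda>y. u y + c * v y) x = T u x + c * T v x) \<and>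
     (\<exists>K::ennreal. K < \<infinity> \<and> (\<forall>u\<in>L2 \<mu>. l2n \<mu> (T u) \<le> K * l2n \<mu> u))"

definition op_norm2 :: "complex measure \<Rightarrow> op \<Rightarrow> ennreal" where
  "op_norm2 \<mu> T = (SUP u\<in>{u\<in>L2 \<mu>. l2n \<mu> u \<le> 1}. l2n \<mu> (T u))"

definition op_comp :: "op \<Rightarrow> op \<Rightarrow> op" (infixl "\<circ>\<^sub>o" 55) where
  "op_comp S T = (\<lambda>u. S (T u))"

definition op_diff :: "op \<Rightarrow> op \<Rightarrow> op" where
  "op_diff S T = (\<lambda>u x. S u x - T u x)"

definition op_eq :: "complex measure \<Rightarrow> op \<Rightarrow> op \<Rightarrow> bool" where
  "op_eq \<mu> S T \<longleftrightarrow> (\<forall>u\<in>L2 \<mu>. AE x in \<mu>. S u x = T u x)"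

definition op_invertible :: "complex measure \<Rightarrow> op \<Rightarrow> bool" where
  "op_invertible \<mu> T \<longleftrightarrow> bounded_op \<mu> T \<and>
     (\<exists>S. bounded_op \<mu> S \<and> op_eq \<mu> (S \<circ>\<^sub>o T) id \<and> op_eq \<mu> (T \<circ>\<^sub>o S) id)"

definition op_inv :: "complex measure \<Rightarrow> op \<Rightarrow> op" where
  "op_inv \<mu> T = (SOME S. bounded_op \<mu> S \<and> op_eq \<mu> (S \<circ>\<^sub>o T) id \<and> op_eq \<mu> (T \<circ>\<^sub>o S) id)"

definition has_op_deriv :: "complex measure \<Rightarrow> (real \<Rightarrow> op) \<Rightarrow> op \<Rightarrow> real \<Rightarrow> bool" where
  "has_op_deriv \<mu> F D t \<longleftrightarrow> bounded_op \<mu> D \<and>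
     ((\<lambda>h. op_norm2 \<mu> (\<lambda>u x. (F (t + h) u x - F t u x) / complex_of_real h - D u x))
        \<longlongrightarrow> 0) (at 0)"

definition op_deriv :: "complex measure \<Rightarrow> (real \<Rightarrow> op) \<Rightarrow> real \<Rightarrow> op" where
  "op_deriv \<mu> F t = (SOME D. has_op_deriv \<mu> F D t)"

definition mult_op :: "(complex \<Rightarrow> complex) \<Rightarrow> op" where
  "mult_op f = (\<lambda>u x. f x * u x)"

definition vp1_trunc :: "real measure \<Rightarrow> (real \<Rightarrow> real) \<Rightarrow> (complex \<Rightarrow> complex) \<Rightarrow> complex \<Rightarrow> real \<Rightarrow> complex" where
  "vp1_trunc \<sigma> s u \<beta> \<epsilon> =
     (LINT \<alpha>:{\<alpha>. cmod (complex_of_real \<alpha> - 1 / \<beta>) > \<epsilon>}|\<sigma>.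
        u (complex_of_real \<alpha>) * complex_of_real (s \<alpha>) / (1 - 1 / (\<beta> * complex_of_real \<alpha>)))"

definition vp2_trunc :: "(complex \<Rightarrow> complex) \<Rightarrow> (complex \<Rightarrow> complex) \<Rightarrow> complex \<Rightarrow> real \<Rightarrow> complex" where
  "vp2_trunc rh u \<beta> \<epsilon> =
     (LINT \<theta>:{\<theta>\<in>{-pi..pi}. cmod (cis \<theta> - 1 / \<beta>) > \<epsilon>}|lborel.
        rh (cis \<theta>) * u (cis \<theta>) / (1 - 1 / (\<beta> * cis \<theta>)))"

definition vp_exists :: "real measure \<Rightarrow> (real \<Rightarrow> real) \<Rightarrow> (complex \<Rightarrow> complex) \<Rightarrow> (complex \<Rightarrow> complex) \<Rightarrow> complex \<Rightarrow> bool" where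
  "vp_exists \<sigma> s rh u \<beta> \<longleftrightarrow>
     (\<forall>\<^sub>F \<epsilon> in at_right 0.
        set_integrable \<sigma> {\<alpha>. cmod (complex_of_real \<alpha> - 1 / \<beta>) > \<epsilon>}
          (\<lambda>\<alpha>. u (complex_of_real \<alpha>) * complex_of_real (s \<alpha>) / (1 - 1 / (\<beta> * complex_of_real \<alpha>))) \<and>
        set_integrable lborel {\<theta>\<in>{-pi..pi}. cmod (cis \<theta> - 1 / \<beta>) > \<epsilon>}
          (\<lambda>\<theta>. rh (cis \<theta>) * u (cis \<theta>) / (1 - 1 / (\<beta> * cis \<theta>)))) \<and>
     (\<exists>L. (vp1_trunc \<sigma> s u \<beta> \<longlongrightarrow> L) (at_right 0)) \<and>
     (\<exists>L. (vp2_trunc rh u \<beta> \<longlongrightarrow> L) (at_right 0))"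

definition C2 :: "real measure \<Rightarrow> (real \<Rightarrow> real) \<Rightarrow> (complex \<Rightarrow> complex) \<Rightarrow> (complex \<Rightarrow> complex) \<Rightarrow> op" where
  "C2 \<sigma> s \<rho> rh u = (\<lambda>\<beta>.
      \<beta> / complex_of_real (cmod \<beta>) * \<rho> \<beta> * u (1 / \<beta>)
      + Lim (at_right 0) (vp1_trunc \<sigma> s u \<beta>)
      + 1 / complex_of_real pi * Lim (at_right 0) (vp2_trunc rh u \<beta>))"

definition Gam :: "real measure \<Rightarrow> (real \<Rightarrow> real) \<Rightarrow> (complex \<Rightarrow> complex) \<Rightarrow> (complex \<Rightarrow> complex) \<Rightarrow> int \<Rightarrow> real \<Rightarrow> op" where
  "Gam \<sigma> s \<rho> rh k t = (\<lambda>u x.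
      mult_op (\<lambda>\<beta>. \<beta> powi (k + 2) * exp (\<beta> * complex_of_real t)) u x
      + (mult_op (\<lambda>\<beta>. \<beta> powi (- k) * exp (complex_of_real t / \<beta>)) \<circ>\<^sub>o C2 \<sigma> s \<rho> rh) u x)"

definition gam :: "real measure \<Rightarrow> (real \<Rightarrow> real) \<Rightarrow> (complex \<Rightarrow> complex) \<Rightarrow> (complex \<Rightarrow> complex) \<Rightarrow> int \<Rightarrow> real \<Rightarrow> op" where
  "gam \<sigma> s \<rho> rh k t =
     op_inv (mu_meas \<sigma>) (Gam \<sigma> s \<rho> rh k t) \<circ>\<^sub>o op_deriv (mu_meas \<sigma>) (Gam \<sigma> s \<rho> rh k) t"

end

(*
  Differentiating the factors e^(beta t) and e^(t/beta) of Gam(k, t) produces the factors beta and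
  1/beta, so d/dt Gam(k) = Gam(k+1); and multiplying by beta + 1/beta gives the three-term
  recurrence Gam(k+1) = M_(beta + 1/beta) Gam(k) - Gam(k-1). Hence gam(k) = Gam(k)^-1 Gam(k+1)
  has inverse Gam(k+1)^-1 Gam(k), and the product and inverse rules give
  gam(k)' = - gam(k)^2 + Gam(k)^-1 Gam(k+2). Cancelling with Gam(k+1)^-1 Gam(k) turns this into
  gam(k)^-1 gam(k)' = gam(k+1) - gam(k), while the recurrence turns it into
  gam(k)' = gam(k-1)^-1 gam(k) - 1. Differentiating the former with the help of the latter
  gives the equation.
*)
theory Submission
  imports Defs
begin

section \<open>Square-integrable functions\<close>

lemma L2_iff: "u \<in> L2 M \<longleftrightarrow> u \<in> borel_measurable M \<and> l2n M u < \<infinity>"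
  by (simp add: L2_def l2n_def)

lemma L2_measurable: "u \<in> L2 M \<Longrightarrow> u \<in> borel_measurable M"
  by (simp add: L2_iff)

text \<open>Squared norms avoid square roots; the price is the factor 2 in the triangle inequality.\<close>
definition sqnorm :: "complex measure \<Rightarrow> (complex \<Rightarrow> complex) \<Rightarrow> real" where
  "sqnorm M u = enn2real (l2n M u)"

lemma sqnorm_nonneg [simp]: "0 \<le> sqnorm M u"
  by (simp add: sqnorm_def)

lemma l2n_eq_sqnorm: "u \<in> L2 M \<Longrightarrow> l2n M u = ennreal (sqnorm M u)"
  by (simp add: L2_iff sqnorm_def)

lemma l2n_cong_AE: "(AE x in M. f x = g x) \<Longrightarrow> l2n M f = l2n M g"
  unfolding l2n_def by (rule nn_integral_cong_AE) auto

lemma sqnorm_cong_AE: "(AE x in M. f x = g x) \<Longrightarrow> sqnorm M f = sqnorm M g"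
  unfolding sqnorm_def by (simp add: l2n_cong_AE)

lemma norm_add_squared_le:
  fixes a b :: "'a::real_normed_vector"
  shows "(norm (a + b))\<^sup>2 \<le> 2 * (norm a)\<^sup>2 + 2 * (norm b)\<^sup>2"
proof -
  have "(norm (a + b))\<^sup>2 \<le> (norm a + norm b)\<^sup>2"
    by (simp add: norm_triangle_ineq power_mono)
  also have "\<dots> \<le> 2 * (norm a)\<^sup>2 + 2 * (norm b)\<^sup>2"
    using zero_le_power2[of "norm a - norm b"] by (simp add: power2_eq_square algebra_simps)
  finally show ?thesis .
qed

lemma l2n_add_le:
  assumes "f \<in> borel_measurable M" "g \<in> borel_measurable M"
  shows "l2n M (\<lambda>x. f x + g x) \<le> 2 * l2n M f + 2 * l2n M g"
proof -
  have "l2n M (\<lambda>x. f x + g x)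
      \<le> (\<integral>\<^sup>+ x. 2 * ennreal ((cmod (f x))\<^sup>2) + 2 * ennreal ((cmod (g x))\<^sup>2) \<partial>M)"
    unfolding l2n_def
  proof (rule nn_integral_mono)
    fix x
    have "ennreal ((cmod (f x + g x))\<^sup>2) \<le> ennreal (2 * (cmod (f x))\<^sup>2 + 2 * (cmod (g x))\<^sup>2)"
      by (rule ennreal_leI[OF norm_add_squared_le])
    then show "ennreal ((cmod (f x + g x))\<^sup>2) \<le> 2 * ennreal ((cmod (f x))\<^sup>2) + 2 * ennreal ((cmod (g x))\<^sup>2)"
      by (simp add: ennreal_plus ennreal_mult)
  qed
  also have "\<dots> = 2 * l2n M f + 2 * l2n M g"
    unfolding l2n_def using assms by (subst nn_integral_add) (auto simp: nn_integral_cmult)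
  finally show ?thesis .
qed

lemma l2n_cmult:
  assumes "f \<in> borel_measurable M"
  shows "l2n M (\<lambda>x. c * f x) = ennreal ((cmod c)\<^sup>2) * l2n M f"
  unfolding l2n_def using assms
  by (simp add: norm_mult power_mult_distrib ennreal_mult nn_integral_cmult)

lemma L2_zero: "(\<lambda>x. 0) \<in> L2 M"
  by (simp add: L2_iff l2n_def)

lemma L2_lincomb:
  assumes u: "u \<in> L2 M" and v: "v \<in> L2 M"
  shows "(\<lambda>x. u x + c * v x) \<in> L2 M"
proof -
  have meas: "u \<in> borel_measurable M" "(\<lambda>x. c * v x) \<in> borel_measurable M"
    using u v by (auto simp: L2_iff)
  have "l2n M (\<lambda>x. u x + c * v x) \<le> 2 * l2n M u + 2 * l2n M (\<lambda>x. c * v x)"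
    by (rule l2n_add_le[OF meas])
  also have "\<dots> < \<infinity>"
    using u v by (auto simp: L2_iff l2n_cmult ennreal_mult_less_top)
  finally show ?thesis using meas by (auto simp: L2_iff)
qed

lemma L2_cmult: "u \<in> L2 M \<Longrightarrow> (\<lambda>x. c * u x) \<in> L2 M"
  using L2_lincomb[OF L2_zero, of u M c] by simp

lemma L2_add: "u \<in> L2 M \<Longrightarrow> v \<in> L2 M \<Longrightarrow> (\<lambda>x. u x + v x) \<in> L2 M"
  using L2_lincomb[of u M v 1] by simp

lemma L2_diff: "u \<in> L2 M \<Longrightarrow> v \<in> L2 M \<Longrightarrow> (\<lambda>x. u x - v x) \<in> L2 M"
  using L2_lincomb[of u M v "-1"] by simp

lemma sqnorm_add_le:
  assumes f: "f \<in> L2 M" and g: "g \<in> L2 M"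
  shows "sqnorm M (\<lambda>x. f x + g x) \<le> 2 * sqnorm M f + 2 * sqnorm M g"
proof -
  have "ennreal (sqnorm M (\<lambda>x. f x + g x)) \<le> ennreal (2 * sqnorm M f + 2 * sqnorm M g)"
    using l2n_add_le[OF L2_measurable[OF f] L2_measurable[OF g]] f g L2_add[OF f g]
    by (simp add: l2n_eq_sqnorm ennreal_plus ennreal_mult)
  then show ?thesis by (subst (asm) ennreal_le_iff) auto
qed

lemma sqnorm_cmult: "f \<in> L2 M \<Longrightarrow> sqnorm M (\<lambda>x. c * f x) = (cmod c)\<^sup>2 * sqnorm M f"
  by (simp add: sqnorm_def l2n_cmult L2_measurable enn2real_mult)

lemma sqnorm_eq_0_iff:
  assumes "f \<in> L2 M"
  shows "sqnorm M f = 0 \<longleftrightarrow> (AE x in M. f x = 0)"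
proof -
  have "l2n M f = 0 \<longleftrightarrow> (AE x in M. ennreal ((cmod (f x))\<^sup>2) = 0)"
    unfolding l2n_def using L2_measurable[OF assms] by (intro nn_integral_0_iff_AE) measurable
  then show ?thesis by (simp add: l2n_eq_sqnorm[OF assms])
qed

section \<open>Bounded operators\<close>

lemma bounded_op_L2: "bounded_op M T \<Longrightarrow> u \<in> L2 M \<Longrightarrow> T u \<in> L2 M"
  by (simp add: bounded_op_def)

lemma bounded_op_lincomb_AE:
  "bounded_op M T \<Longrightarrow> u \<in> L2 M \<Longrightarrow> v \<in> L2 M \<Longrightarrow>
     AE x in M. T (\<lambda>y. u y + c * v y) x = T u x + c * T v x"
  by (simp add: bounded_op_def)

lemma bounded_op_sqnorm_bound:
  assumes "bounded_op M T"
  obtains K where "0 \<le> K" "\<And>u. u \<in> L2 M \<Longrightarrow> sqnorm M (T u) \<le> K * sqnorm M u"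
proof -
  obtain K where K: "K < \<infinity>" "\<And>u. u \<in> L2 M \<Longrightarrow> l2n M (T u) \<le> K * l2n M u"
    using assms by (auto simp: bounded_op_def)
  have "sqnorm M (T u) \<le> enn2real K * sqnorm M u" if u: "u \<in> L2 M" for u
  proof -
    have "enn2real (l2n M (T u)) \<le> enn2real (K * l2n M u)"
      using K u by (intro enn2real_mono) (auto simp: L2_iff ennreal_mult_less_top)
    then show ?thesis by (simp add: sqnorm_def enn2real_mult)
  qed
  then show ?thesis using that[of "enn2real K"] by simp
qed

lemma bounded_op_zero_AE:
  assumes "bounded_op M T"
  shows "AE x in M. T (\<lambda>y. 0) x = 0"
proof -
  obtain K where "\<And>u. u \<in> L2 M \<Longrightarrow> sqnorm M (T u) \<le> K * sqnorm M u"
    using bounded_op_sqnorm_bound[OF assms] by blast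
  then have "sqnorm M (T (\<lambda>y. 0)) \<le> 0"
    using L2_zero sqnorm_eq_0_iff[OF L2_zero] by fastforce
  then show ?thesis
    using sqnorm_eq_0_iff[OF bounded_op_L2[OF assms L2_zero]] sqnorm_nonneg
    by (metis order_antisym)
qed

lemma bounded_op_cmult_AE:
  assumes "bounded_op M T" "u \<in> L2 M"
  shows "AE x in M. T (\<lambda>y. c * u y) x = c * T u x"
  using bounded_op_lincomb_AE[OF assms(1) L2_zero assms(2), of c] bounded_op_zero_AE[OF assms(1)]
  by eventually_elim simp

lemma bounded_op_diff_AE:
  "bounded_op M T \<Longrightarrow> u \<in> L2 M \<Longrightarrow> v \<in> L2 M \<Longrightarrow> AE x in M. T (\<lambda>y. u y - v y) x = T u x - T v x"
  using bounded_op_lincomb_AE[of M T u v "-1"] by simp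

lemma bounded_op_cong_AE:
  assumes T: "bounded_op M T" and u: "u \<in> L2 M" and v: "v \<in> L2 M"
    and uv: "AE x in M. u x = v x"
  shows "AE x in M. T u x = T v x"
proof -
  obtain K where K: "\<And>u. u \<in> L2 M \<Longrightarrow> sqnorm M (T u) \<le> K * sqnorm M u"
    using bounded_op_sqnorm_bound[OF T] by blast
  have w: "(\<lambda>y. u y - v y) \<in> L2 M" using L2_diff[OF u v] .
  have "sqnorm M (\<lambda>y. u y - v y) = 0"
    using uv by (subst sqnorm_eq_0_iff[OF w]) auto
  then have "sqnorm M (T (\<lambda>y. u y - v y)) = 0"
    using K[OF w] sqnorm_nonneg[of M "T (\<lambda>y. u y - v y)"] by simp
  then have "AE x in M. T (\<lambda>y. u y - v y) x = 0"
    using sqnorm_eq_0_iff[OF bounded_op_L2[OF T w]] by blast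
  then show ?thesis using bounded_op_diff_AE[OF T u v] by eventually_elim simp
qed

definition op_sqnorm :: "complex measure \<Rightarrow> op \<Rightarrow> real" where
  "op_sqnorm M T = enn2real (op_norm2 M T)"

lemma op_sqnorm_nonneg [simp]: "0 \<le> op_sqnorm M T"
  by (simp add: op_sqnorm_def)

lemma op_norm2_le:
  assumes "\<And>u. u \<in> L2 M \<Longrightarrow> T u \<in> L2 M" "0 \<le> K"
    and "\<And>u. u \<in> L2 M \<Longrightarrow> sqnorm M (T u) \<le> K * sqnorm M u"
  shows "op_norm2 M T \<le> ennreal K"
  unfolding op_norm2_def
proof (rule SUP_least)
  fix u assume "u \<in> {u \<in> L2 M. l2n M u \<le> 1}"
  then have u: "u \<in> L2 M" "sqnorm M u \<le> 1" by (auto simp: l2n_eq_sqnorm)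
  have "sqnorm M (T u) \<le> K"
    using assms(3)[OF u(1)] mult_left_le[OF u(2) assms(2)] by linarith
  then show "l2n M (T u) \<le> ennreal K"
    using l2n_eq_sqnorm[OF assms(1)[OF u(1)]] by (simp add: ennreal_leI)
qed

lemma op_sqnorm_le:
  assumes "\<And>u. u \<in> L2 M \<Longrightarrow> T u \<in> L2 M" "0 \<le> K"
    and "\<And>u. u \<in> L2 M \<Longrightarrow> sqnorm M (T u) \<le> K * sqnorm M u"
  shows "op_sqnorm M T \<le> K"
  using enn2real_mono[OF op_norm2_le[OF assms]] assms(2) by (simp add: op_sqnorm_def)

lemma op_norm2_eq_op_sqnorm:
  assumes "bounded_op M T"
  shows "op_norm2 M T = ennreal (op_sqnorm M T)"
proof -
  obtain K where "0 \<le> K" "\<And>u. u \<in> L2 M \<Longrightarrow> sqnorm M (T u) \<le> K * sqnorm M u"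
    using bounded_op_sqnorm_bound[OF assms] by blast
  then have "op_norm2 M T \<le> ennreal K"
    using bounded_op_L2[OF assms] by (intro op_norm2_le) auto
  then have "op_norm2 M T < \<infinity>" using ennreal_less_top[of K] by (simp add: order.strict_trans1)
  then show ?thesis by (simp add: op_sqnorm_def)
qed

lemma sqnorm_apply_le:
  assumes T: "bounded_op M T" and u: "u \<in> L2 M"
  shows "sqnorm M (T u) \<le> op_sqnorm M T * sqnorm M u"
proof (cases "sqnorm M u = 0")
  case True
  then have "AE x in M. T u x = T (\<lambda>y. 0) x"
    using u by (intro bounded_op_cong_AE[OF T u L2_zero]) (simp add: sqnorm_eq_0_iff)
  then have "AE x in M. T u x = 0"
    using bounded_op_zero_AE[OF T] by eventually_elim simp
  then have "sqnorm M (T u) = 0" using sqnorm_eq_0_iff[OF bounded_op_L2[OF T u]] by simp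
  then show ?thesis using True by simp
next
  case False
  define r where "r = sqnorm M u"
  have r: "r > 0" using False sqnorm_nonneg[of M u] unfolding r_def by linarith
  define c where "c = complex_of_real (1 / sqrt r)"
  have c: "(cmod c)\<^sup>2 = 1 / r" unfolding c_def norm_of_real using r by (simp add: power_divide)
  define v where "v = (\<lambda>x. c * u x)"
  have v: "v \<in> L2 M" unfolding v_def using L2_cmult[OF u] .
  have "sqnorm M v = 1" using r c by (simp add: v_def sqnorm_cmult[OF u] r_def)
  then have "l2n M (T v) \<le> op_norm2 M T"
    unfolding op_norm2_def using v by (intro SUP_upper) (auto simp: l2n_eq_sqnorm)
  then have "sqnorm M (T v) \<le> op_sqnorm M T"
    using bounded_op_L2[OF T v] op_norm2_eq_op_sqnorm[OF T] by (simp add: l2n_eq_sqnorm)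
  moreover have "sqnorm M (T v) = sqnorm M (T u) / r"
  proof -
    have "sqnorm M (T v) = sqnorm M (\<lambda>x. c * T u x)"
      unfolding v_def by (rule sqnorm_cong_AE[OF bounded_op_cmult_AE[OF T u]])
    then show ?thesis using c by (simp add: sqnorm_cmult[OF bounded_op_L2[OF T u]])
  qed
  ultimately show ?thesis using r by (simp add: r_def divide_le_eq mult.commute)
qed

lemma bounded_opI:
  assumes "\<And>u. u \<in> L2 M \<Longrightarrow> T u \<in> L2 M"
    and "\<And>u v c. u \<in> L2 M \<Longrightarrow> v \<in> L2 M \<Longrightarrow> AE x in M. T (\<lambda>y. u y + c * v y) x = T u x + c * T v x"
    and "0 \<le> K" "\<And>u. u \<in> L2 M \<Longrightarrow> sqnorm M (T u) \<le> K * sqnorm M u"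
  shows "bounded_op M T"
  unfolding bounded_op_def
proof (intro conjI ballI allI exI[of _ "ennreal K"])
  fix u assume u: "u \<in> L2 M"
  show "T u \<in> L2 M" using assms(1)[OF u] .
  show "l2n M (T u) \<le> ennreal K * l2n M u"
    using assms(1,3,4) u by (simp add: l2n_eq_sqnorm ennreal_mult[symmetric] ennreal_leI)
qed (use assms(2) in auto)

lemma bounded_op_id: "bounded_op M id"
  by (rule bounded_opI[where K=1]) auto

lemma sqnorm_lincomb_apply_le:
  assumes S: "bounded_op M S" and T: "bounded_op M T" and u: "u \<in> L2 M"
  shows "sqnorm M (\<lambda>x. a * S u x + b * T u x)
    \<le> (2 * (cmod a)\<^sup>2 * op_sqnorm M S + 2 * (cmod b)\<^sup>2 * op_sqnorm M T) * sqnorm M u"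
proof -
  have Su: "S u \<in> L2 M" and Tu: "T u \<in> L2 M" using bounded_op_L2 S T u by auto
  have "sqnorm M (\<lambda>x. a * S u x + b * T u x)
      \<le> 2 * ((cmod a)\<^sup>2 * sqnorm M (S u)) + 2 * ((cmod b)\<^sup>2 * sqnorm M (T u))"
    using sqnorm_add_le[OF L2_cmult[OF Su] L2_cmult[OF Tu]] by (simp add: sqnorm_cmult Su Tu)
  also have "\<dots> \<le> 2 * ((cmod a)\<^sup>2 * (op_sqnorm M S * sqnorm M u)) + 2 * ((cmod b)\<^sup>2 * (op_sqnorm M T * sqnorm M u))"
    using sqnorm_apply_le[OF S u] sqnorm_apply_le[OF T u] by (intro add_mono mult_left_mono) auto
  finally show ?thesis by (simp add: algebra_simps)
qed

lemma bounded_op_lincomb: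
  assumes S: "bounded_op M S" and T: "bounded_op M T"
  shows "bounded_op M (\<lambda>u x. a * S u x + b * T u x)"
proof (rule bounded_opI[OF _ _ _ sqnorm_lincomb_apply_le[OF S T]])
  fix u assume "u \<in> L2 M"
  then show "(\<lambda>x. a * S u x + b * T u x) \<in> L2 M"
    using bounded_op_L2 S T by (intro L2_add L2_cmult) auto
next
  fix u v c assume u: "u \<in> L2 M" and v: "v \<in> L2 M"
  show "AE x in M. a * S (\<lambda>y. u y + c * v y) x + b * T (\<lambda>y. u y + c * v y) x =
          a * S u x + b * T u x + c * (a * S v x + b * T v x)"
    using bounded_op_lincomb_AE[OF S u v, of c] bounded_op_lincomb_AE[OF T u v, of c]
    by eventually_elim (simp add: algebra_simps)
qed simp

lemma op_sqnorm_lincomb_le: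
  assumes S: "bounded_op M S" and T: "bounded_op M T"
  shows "op_sqnorm M (\<lambda>u x. a * S u x + b * T u x)
    \<le> 2 * (cmod a)\<^sup>2 * op_sqnorm M S + 2 * (cmod b)\<^sup>2 * op_sqnorm M T"
  using bounded_op_L2[OF bounded_op_lincomb[OF S T]] sqnorm_lincomb_apply_le[OF S T]
  by (intro op_sqnorm_le) auto

lemma sqnorm_comp_apply_le:
  assumes S: "bounded_op M S" and T: "bounded_op M T" and u: "u \<in> L2 M"
  shows "sqnorm M ((S \<circ>\<^sub>o T) u) \<le> op_sqnorm M S * op_sqnorm M T * sqnorm M u"
proof -
  have "sqnorm M (S (T u)) \<le> op_sqnorm M S * sqnorm M (T u)"
    using sqnorm_apply_le[OF S bounded_op_L2[OF T u]] .
  also have "\<dots> \<le> op_sqnorm M S * (op_sqnorm M T * sqnorm M u)"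
    using sqnorm_apply_le[OF T u] by (intro mult_left_mono) auto
  finally show ?thesis by (simp add: op_comp_def mult.assoc)
qed

lemma bounded_op_comp:
  assumes S: "bounded_op M S" and T: "bounded_op M T"
  shows "bounded_op M (S \<circ>\<^sub>o T)"
proof (rule bounded_opI[OF _ _ _ sqnorm_comp_apply_le[OF S T]])
  fix u assume u: "u \<in> L2 M"
  show "(S \<circ>\<^sub>o T) u \<in> L2 M"
    unfolding op_comp_def by (rule bounded_op_L2[OF S bounded_op_L2[OF T u]])
next
  fix u v c assume u: "u \<in> L2 M" and v: "v \<in> L2 M"
  have Tu: "T u \<in> L2 M" and Tv: "T v \<in> L2 M" using bounded_op_L2 T u v by auto
  have "AE x in M. S (T (\<lambda>y. u y + c * v y)) x = S (\<lambda>y. T u y + c * T v y) x"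
    by (rule bounded_op_cong_AE[OF S bounded_op_L2[OF T L2_lincomb[OF u v]] L2_lincomb[OF Tu Tv]
          bounded_op_lincomb_AE[OF T u v]])
  then show "AE x in M. (S \<circ>\<^sub>o T) (\<lambda>y. u y + c * v y) x = (S \<circ>\<^sub>o T) u x + c * (S \<circ>\<^sub>o T) v x"
    using bounded_op_lincomb_AE[OF S Tu Tv, of c] unfolding op_comp_def by eventually_elim simp
qed simp

lemma op_sqnorm_comp_le:
  assumes S: "bounded_op M S" and T: "bounded_op M T"
  shows "op_sqnorm M (S \<circ>\<^sub>o T) \<le> op_sqnorm M S * op_sqnorm M T"
  using bounded_op_L2[OF bounded_op_comp[OF S T]] sqnorm_comp_apply_le[OF S T]
  by (intro op_sqnorm_le) auto

section \<open>Operator identities modulo null sets\<close>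

definition op_add :: "op \<Rightarrow> op \<Rightarrow> op" where
  "op_add S T = (\<lambda>u x. S u x + T u x)"

definition op_neg :: "op \<Rightarrow> op" where
  "op_neg T = (\<lambda>u x. - T u x)"

lemma bounded_op_add: "bounded_op M S \<Longrightarrow> bounded_op M T \<Longrightarrow> bounded_op M (op_add S T)"
  using bounded_op_lincomb[of M S T 1 1] by (simp add: op_add_def)

lemma bounded_op_diff: "bounded_op M S \<Longrightarrow> bounded_op M T \<Longrightarrow> bounded_op M (op_diff S T)"
  using bounded_op_lincomb[of M S T 1 "-1"] by (simp add: op_diff_def)

lemma bounded_op_neg: "bounded_op M T \<Longrightarrow> bounded_op M (op_neg T)"
  using bounded_op_lincomb[of M T T "-1" 0] by (simp add: op_neg_def)

lemma op_sqnorm_add_le: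
  "bounded_op M S \<Longrightarrow> bounded_op M T \<Longrightarrow> op_sqnorm M (op_add S T) \<le> 2 * op_sqnorm M S + 2 * op_sqnorm M T"
  using op_sqnorm_lincomb_le[of M S T 1 1] by (simp add: op_add_def)

lemma op_sqnorm_diff_le:
  "bounded_op M S \<Longrightarrow> bounded_op M T \<Longrightarrow> op_sqnorm M (op_diff S T) \<le> 2 * op_sqnorm M S + 2 * op_sqnorm M T"
  using op_sqnorm_lincomb_le[of M S T 1 "-1"] by (simp add: op_diff_def)

lemma op_eq_refl [simp]: "op_eq M T T"
  by (simp add: op_eq_def)

lemma op_eq_D: "op_eq M S T \<Longrightarrow> u \<in> L2 M \<Longrightarrow> AE x in M. S u x = T u x"
  by (simp add: op_eq_def)

lemma op_eq_sym: "op_eq M S T \<Longrightarrow> op_eq M T S"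
  unfolding op_eq_def by (auto elim: AE_mp)

lemma op_eq_trans [trans]:
  assumes "op_eq M S T" "op_eq M T U"
  shows "op_eq M S U"
  unfolding op_eq_def
proof
  fix u assume "u \<in> L2 M"
  from op_eq_D[OF assms(1) this] op_eq_D[OF assms(2) this]
  show "AE x in M. S u x = U u x" by eventually_elim simp
qed

lemma op_eq_comp_left:
  "op_eq M S S' \<Longrightarrow> bounded_op M T \<Longrightarrow> op_eq M (S \<circ>\<^sub>o T) (S' \<circ>\<^sub>o T)"
  by (simp add: op_eq_def op_comp_def bounded_op_L2)

lemma op_eq_comp_right:
  "bounded_op M S \<Longrightarrow> bounded_op M T \<Longrightarrow> bounded_op M T' \<Longrightarrow> op_eq M T T' \<Longrightarrow>
    op_eq M (S \<circ>\<^sub>o T) (S \<circ>\<^sub>o T')"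
  unfolding op_eq_def op_comp_def using bounded_op_cong_AE bounded_op_L2 by blast

lemma op_eq_comp:
  assumes "bounded_op M S" "bounded_op M S'" "bounded_op M T" "bounded_op M T'"
    and "op_eq M S S'" "op_eq M T T'"
  shows "op_eq M (S \<circ>\<^sub>o T) (S' \<circ>\<^sub>o T')"
  using op_eq_trans[OF op_eq_comp_right[of M S T T'] op_eq_comp_left[of M S S' T']] assms by blast

lemma op_eq_diff:
  assumes "op_eq M S S'" "op_eq M T T'"
  shows "op_eq M (op_diff S T) (op_diff S' T')"
  unfolding op_eq_def
proof
  fix u assume "u \<in> L2 M"
  from op_eq_D[OF assms(1) this] op_eq_D[OF assms(2) this]
  show "AE x in M. op_diff S T u x = op_diff S' T' u x" by eventually_elim (simp add: op_diff_def)
qed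

lemma op_comp_assoc: "(S \<circ>\<^sub>o T) \<circ>\<^sub>o U = S \<circ>\<^sub>o (T \<circ>\<^sub>o U)"
  by (simp add: op_comp_def)

lemma op_comp_id [simp]: "S \<circ>\<^sub>o id = S" "id \<circ>\<^sub>o S = S"
  by (simp_all add: op_comp_def fun_eq_iff)

lemma op_diff_comp: "op_diff T U \<circ>\<^sub>o S = op_diff (T \<circ>\<^sub>o S) (U \<circ>\<^sub>o S)"
  by (simp add: op_comp_def op_diff_def)

lemma op_comp_diff:
  "bounded_op M S \<Longrightarrow> bounded_op M T \<Longrightarrow> bounded_op M U \<Longrightarrow>
    op_eq M (S \<circ>\<^sub>o op_diff T U) (op_diff (S \<circ>\<^sub>o T) (S \<circ>\<^sub>o U))"
  unfolding op_eq_def op_comp_def op_diff_def using bounded_op_diff_AE bounded_op_L2 by blast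

lemma op_comp_cancel:
  "bounded_op M B \<Longrightarrow> op_eq M (X \<circ>\<^sub>o Y) id \<Longrightarrow> op_eq M (X \<circ>\<^sub>o (Y \<circ>\<^sub>o B)) B"
  using op_eq_comp_left[of M "X \<circ>\<^sub>o Y" id B] by (simp add: op_comp_assoc)

lemma op_comp_cancel_inner:
  assumes "bounded_op M A" "bounded_op M X" "bounded_op M Y" "bounded_op M B" "op_eq M (X \<circ>\<^sub>o Y) id"
  shows "op_eq M (A \<circ>\<^sub>o (X \<circ>\<^sub>o (Y \<circ>\<^sub>o B))) (A \<circ>\<^sub>o B)"
  using assms by (intro op_eq_comp_right op_comp_cancel bounded_op_comp)

lemma op_sqnorm_cong:
  assumes "op_eq M S T"
  shows "op_sqnorm M S = op_sqnorm M T"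
proof -
  have "op_norm2 M S = op_norm2 M T"
    unfolding op_norm2_def using assms by (intro SUP_cong refl l2n_cong_AE) (auto simp: op_eq_def)
  then show ?thesis by (simp add: op_sqnorm_def)
qed

lemma op_eq_if_op_sqnorm_diff_eq_0:
  assumes S: "bounded_op M S" and T: "bounded_op M T" and 0: "op_sqnorm M (op_diff S T) = 0"
  shows "op_eq M S T"
  unfolding op_eq_def
proof
  fix u assume u: "u \<in> L2 M"
  have ST: "bounded_op M (op_diff S T)" using bounded_op_diff[OF S T] .
  have "sqnorm M (op_diff S T u) = 0"
    using sqnorm_apply_le[OF ST u] 0 sqnorm_nonneg[of M "op_diff S T u"] by simp
  then have "AE x in M. op_diff S T u x = 0"
    using sqnorm_eq_0_iff[OF bounded_op_L2[OF ST u]] by blast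
  then show "AE x in M. S u x = T u x" by eventually_elim (simp add: op_diff_def)
qed

section \<open>Inverses\<close>

lemma bounded_op_if_invertible: "op_invertible M T \<Longrightarrow> bounded_op M T"
  by (simp add: op_invertible_def)

lemma op_invertibleD:
  assumes "op_invertible M T"
  shows bounded_op_inv: "bounded_op M (op_inv M T)"
    and op_inv_comp: "op_eq M (op_inv M T \<circ>\<^sub>o T) id"
    and op_comp_inv: "op_eq M (T \<circ>\<^sub>o op_inv M T) id"
proof -
  have "\<exists>S. bounded_op M S \<and> op_eq M (S \<circ>\<^sub>o T) id \<and> op_eq M (T \<circ>\<^sub>o S) id"
    using assms by (simp add: op_invertible_def)
  then have "bounded_op M (op_inv M T) \<and> op_eq M (op_inv M T \<circ>\<^sub>o T) id \<and> op_eq M (T \<circ>\<^sub>o op_inv M T) id"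
    unfolding op_inv_def by (rule someI_ex)
  then show "bounded_op M (op_inv M T)" "op_eq M (op_inv M T \<circ>\<^sub>o T) id" "op_eq M (T \<circ>\<^sub>o op_inv M T) id"
    by auto
qed

lemma op_invertibleI:
  "bounded_op M T \<Longrightarrow> bounded_op M S \<Longrightarrow> op_eq M (S \<circ>\<^sub>o T) id \<Longrightarrow> op_eq M (T \<circ>\<^sub>o S) id \<Longrightarrow>
    op_invertible M T"
  unfolding op_invertible_def by blast

lemma op_inv_unique:
  assumes T: "op_invertible M T" and S: "bounded_op M S" and ST: "op_eq M (S \<circ>\<^sub>o T) id"
  shows "op_eq M (op_inv M T) S"
proof -
  have "op_eq M (op_inv M T) ((S \<circ>\<^sub>o T) \<circ>\<^sub>o op_inv M T)"
    using op_eq_comp_left[OF op_eq_sym[OF ST] bounded_op_inv[OF T]] by simp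
  also have "op_eq M \<dots> S"
    unfolding op_comp_assoc
    using op_eq_comp_right[OF S _ bounded_op_id op_comp_inv[OF T]] bounded_op_if_invertible[OF T]
      bounded_op_inv[OF T]
    by (simp add: bounded_op_comp)
  finally show ?thesis .
qed

lemma resolvent_identity:
  assumes A: "op_invertible M A" and B: "op_invertible M B"
  shows "op_eq M (op_inv M A \<circ>\<^sub>o op_diff A B \<circ>\<^sub>o op_inv M B) (op_diff (op_inv M B) (op_inv M A))"
proof -
  note bA = bounded_op_if_invertible[OF A] bounded_op_inv[OF A]
    and bB = bounded_op_if_invertible[OF B] bounded_op_inv[OF B]
  have eq: "op_inv M A \<circ>\<^sub>o op_diff A B \<circ>\<^sub>o op_inv M B
      = op_inv M A \<circ>\<^sub>o op_diff (A \<circ>\<^sub>o op_inv M B) (B \<circ>\<^sub>o op_inv M B)"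
    by (simp add: op_comp_assoc op_diff_comp)
  have "op_eq M (op_inv M A \<circ>\<^sub>o op_diff A B \<circ>\<^sub>o op_inv M B)
      (op_diff (op_inv M A \<circ>\<^sub>o (A \<circ>\<^sub>o op_inv M B)) (op_inv M A \<circ>\<^sub>o (B \<circ>\<^sub>o op_inv M B)))"
    unfolding eq by (rule op_comp_diff[OF bA(2) bounded_op_comp[OF bA(1) bB(2)] bounded_op_comp[OF bB]])
  also have "op_eq M \<dots> (op_diff (op_inv M B) (op_inv M A \<circ>\<^sub>o id))"
  proof (rule op_eq_diff)
    show "op_eq M (op_inv M A \<circ>\<^sub>o (A \<circ>\<^sub>o op_inv M B)) (op_inv M B)"
      by (rule op_comp_cancel[OF bB(2) op_inv_comp[OF A]])
    show "op_eq M (op_inv M A \<circ>\<^sub>o (B \<circ>\<^sub>o op_inv M B)) (op_inv M A \<circ>\<^sub>o id)"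
      by (rule op_eq_comp_right[OF bA(2) bounded_op_comp[OF bB] bounded_op_id op_comp_inv[OF B]])
  qed
  finally show ?thesis by simp
qed

lemma op_sqnorm_inv_le:
  assumes A: "op_invertible M A" and B: "op_invertible M B"
    and small: "op_sqnorm M (op_inv M A) * op_sqnorm M (op_diff B A) \<le> 1 / 4"
  shows "op_sqnorm M (op_inv M B) \<le> 4 * op_sqnorm M (op_inv M A)"
proof (rule op_sqnorm_le)
  note bA = bounded_op_if_invertible[OF A] bounded_op_inv[OF A]
    and bB = bounded_op_if_invertible[OF B] bounded_op_inv[OF B]
  define N where "N = op_sqnorm M (op_inv M A)"
  fix v assume v: "v \<in> L2 M"
  define w where "w = op_inv M B v"
  have w: "w \<in> L2 M" unfolding w_def using bounded_op_L2[OF bB(2) v] .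
  have BA: "bounded_op M (op_diff B A)" using bA bB by (intro bounded_op_diff)
  have "sqnorm M w = sqnorm M (op_inv M A (A w))"
    using op_eq_D[OF op_inv_comp[OF A] w] by (intro sqnorm_cong_AE) (auto simp: op_comp_def)
  also have "\<dots> \<le> N * sqnorm M (A w)"
    unfolding N_def using sqnorm_apply_le[OF bA(2) bounded_op_L2[OF bA(1) w]] .
  also have "\<dots> \<le> N * (2 * sqnorm M v + 2 * (op_sqnorm M (op_diff B A) * sqnorm M w))"
  proof -
    have "sqnorm M (A w) = sqnorm M (\<lambda>x. B w x + (-1) * op_diff B A w x)"
      by (simp add: op_diff_def)
    also have "\<dots> \<le> 2 * sqnorm M (B w) + 2 * sqnorm M (\<lambda>x. (-1) * op_diff B A w x)"
      by (rule sqnorm_add_le[OF bounded_op_L2[OF bB(1) w] L2_cmult[OF bounded_op_L2[OF BA w]]])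
    finally have "sqnorm M (A w) \<le> 2 * sqnorm M (B w) + 2 * sqnorm M (op_diff B A w)"
      using sqnorm_cmult[OF bounded_op_L2[OF BA w], of "-1"] by simp
    moreover have "sqnorm M (B w) = sqnorm M v"
      using op_eq_D[OF op_comp_inv[OF B] v] unfolding w_def by (intro sqnorm_cong_AE) (auto simp: op_comp_def)
    ultimately show ?thesis
      using sqnorm_apply_le[OF BA w] by (intro mult_left_mono) (auto simp: N_def)
  qed
  also have "\<dots> \<le> 2 * N * sqnorm M v + 1/2 * sqnorm M w"
    using mult_right_mono[OF small[folded N_def], of "sqnorm M w"] by (simp add: algebra_simps)
  finally show "sqnorm M (op_inv M B v) \<le> 4 * N * sqnorm M v" unfolding w_def by linarith
qed (simp_all add: bounded_op_L2[OF bounded_op_inv[OF B]])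

section \<open>Derivatives of operator families\<close>

definition deriv_error :: "(real \<Rightarrow> op) \<Rightarrow> real \<Rightarrow> op \<Rightarrow> real \<Rightarrow> op" where
  "deriv_error F t D h = (\<lambda>u x. (F (t + h) u x - F t u x) / complex_of_real h - D u x)"

lemma has_op_deriv_iff:
  "has_op_deriv M F D t \<longleftrightarrow> bounded_op M D \<and> ((\<lambda>h. op_norm2 M (deriv_error F t D h)) \<longlongrightarrow> 0) (at 0)"
  by (simp add: has_op_deriv_def deriv_error_def)

lemma has_op_deriv_bounded: "has_op_deriv M F D t \<Longrightarrow> bounded_op M D"
  by (simp add: has_op_deriv_iff)

lemma bounded_op_deriv_error:
  assumes "bounded_op M (F (t + h))" "bounded_op M (F t)" "bounded_op M D"
  shows "bounded_op M (deriv_error F t D h)"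
proof -
  have "bounded_op M (\<lambda>u x. (1 / of_real h) * op_diff (F (t + h)) (F t) u x + (-1) * D u x)"
    by (rule bounded_op_lincomb[OF bounded_op_diff[OF assms(1,2)] assms(3)])
  moreover have "(\<lambda>u x. (1 / of_real h) * op_diff (F (t + h)) (F t) u x + (-1) * D u x) = deriv_error F t D h"
    by (simp add: deriv_error_def op_diff_def fun_eq_iff divide_inverse mult.commute)
  ultimately show ?thesis by simp
qed

lemma has_op_deriv_iff_tendsto:
  assumes F: "\<And>s. bounded_op M (F s)" and D: "bounded_op M D"
  shows "has_op_deriv M F D t \<longleftrightarrow> ((\<lambda>h. op_sqnorm M (deriv_error F t D h)) \<longlongrightarrow> 0) (at 0)"
proof -
  have "\<And>h. op_norm2 M (deriv_error F t D h) = ennreal (op_sqnorm M (deriv_error F t D h))"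
    using op_norm2_eq_op_sqnorm bounded_op_deriv_error F D by blast
  then have "has_op_deriv M F D t \<longleftrightarrow>
      ((\<lambda>h. ennreal (op_sqnorm M (deriv_error F t D h))) \<longlongrightarrow> ennreal 0) (at 0)"
    by (simp add: has_op_deriv_iff D)
  also have "\<dots> \<longleftrightarrow> ((\<lambda>h. op_sqnorm M (deriv_error F t D h)) \<longlongrightarrow> 0) (at 0)"
    by (rule tendsto_ennreal_iff) auto
  finally show ?thesis .
qed

lemma has_op_deriv_tendsto:
  "(\<And>s. bounded_op M (F s)) \<Longrightarrow> has_op_deriv M F D t \<Longrightarrow>
    ((\<lambda>h. op_sqnorm M (deriv_error F t D h)) \<longlongrightarrow> 0) (at 0)"
  using has_op_deriv_iff_tendsto has_op_deriv_bounded by blast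

lemma has_op_derivI_bound:
  assumes F: "\<And>s. bounded_op M (F s)" and D: "bounded_op M D"
    and bound: "\<forall>\<^sub>F h in at 0. op_sqnorm M (deriv_error F t D h) \<le> e h"
    and e: "(e \<longlongrightarrow> 0) (at 0)"
  shows "has_op_deriv M F D t"
  unfolding has_op_deriv_iff_tendsto[OF F D]
  by (rule tendsto_sandwich[OF _ bound tendsto_const e]) simp

lemma has_op_deriv_cong:
  assumes d: "has_op_deriv M F D t" and FG: "\<And>s. op_eq M (F s) (G s)"
    and DD': "op_eq M D D'" and D': "bounded_op M D'"
  shows "has_op_deriv M G D' t"
proof -
  have "op_eq M (deriv_error F t D h) (deriv_error G t D' h)" for h
    unfolding op_eq_def
  proof
    fix u assume u: "u \<in> L2 M"
    show "AE x in M. deriv_error F t D h u x = deriv_error G t D' h u x"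
      using op_eq_D[OF FG u, of "t + h"] op_eq_D[OF FG u, of t] op_eq_D[OF DD' u]
      by eventually_elim (simp add: deriv_error_def)
  qed
  then have "op_norm2 M (deriv_error F t D h) = op_norm2 M (deriv_error G t D' h)" for h
    unfolding op_norm2_def op_eq_def by (intro SUP_cong refl l2n_cong_AE) auto
  then show ?thesis using d D' by (simp add: has_op_deriv_iff)
qed

lemma has_op_deriv_unique:
  assumes F: "\<And>s. bounded_op M (F s)"
    and d1: "has_op_deriv M F D1 t" and d2: "has_op_deriv M F D2 t"
  shows "op_eq M D1 D2"
proof -
  note b = has_op_deriv_bounded[OF d1] has_op_deriv_bounded[OF d2]
  have le: "op_sqnorm M (op_diff D1 D2)
      \<le> 2 * op_sqnorm M (deriv_error F t D2 h) + 2 * op_sqnorm M (deriv_error F t D1 h)" for h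
  proof -
    have "op_diff D1 D2 = op_diff (deriv_error F t D2 h) (deriv_error F t D1 h)"
      by (simp add: deriv_error_def op_diff_def fun_eq_iff)
    then show ?thesis using F b by (simp add: op_sqnorm_diff_le bounded_op_deriv_error)
  qed
  have lim: "((\<lambda>h. 2 * op_sqnorm M (deriv_error F t D2 h) + 2 * op_sqnorm M (deriv_error F t D1 h)) \<longlongrightarrow> 0) (at 0)"
    using has_op_deriv_tendsto[OF F d1] has_op_deriv_tendsto[OF F d2]
    by (auto intro!: tendsto_eq_intros)
  have "op_sqnorm M (op_diff D1 D2) \<le> 0"
    by (rule tendsto_le[OF _ lim tendsto_const]) (use le in auto)
  then show ?thesis
    using op_eq_if_op_sqnorm_diff_eq_0[OF b] op_sqnorm_nonneg[of M "op_diff D1 D2"] by linarith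
qed

lemma has_op_deriv_op_deriv: "has_op_deriv M F D t \<Longrightarrow> has_op_deriv M F (op_deriv M F t) t"
  unfolding op_deriv_def by (rule someI[where P = "\<lambda>D. has_op_deriv M F D t"])

lemma op_deriv_op_eq:
  "(\<And>s. bounded_op M (F s)) \<Longrightarrow> has_op_deriv M F D t \<Longrightarrow> op_eq M (op_deriv M F t) D"
  using has_op_deriv_unique has_op_deriv_op_deriv by blast

lemma has_op_deriv_continuous:
  assumes F: "\<And>s. bounded_op M (F s)" and d: "has_op_deriv M F D t"
  shows "((\<lambda>h. op_sqnorm M (op_diff (F (t + h)) (F t))) \<longlongrightarrow> 0) (at 0)"
proof (rule tendsto_sandwich[OF _ _ tendsto_const])
  note D = has_op_deriv_bounded[OF d]
  show "\<forall>\<^sub>F h in at 0. op_sqnorm M (op_diff (F (t + h)) (F t))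
      \<le> 2 * h\<^sup>2 * op_sqnorm M (deriv_error F t D h) + 2 * h\<^sup>2 * op_sqnorm M D"
    unfolding eventually_at_filter
  proof (intro always_eventually allI impI)
    fix h :: real assume h: "h \<noteq> 0"
    have "op_diff (F (t + h)) (F t) = (\<lambda>u x. of_real h * deriv_error F t D h u x + of_real h * D u x)"
      using h by (simp add: deriv_error_def op_diff_def fun_eq_iff field_simps)
    then show "op_sqnorm M (op_diff (F (t + h)) (F t))
        \<le> 2 * h\<^sup>2 * op_sqnorm M (deriv_error F t D h) + 2 * h\<^sup>2 * op_sqnorm M D"
      using op_sqnorm_lincomb_le[OF bounded_op_deriv_error[OF F F D] D, where a = "of_real h" and b = "of_real h"]
      by simp
  qed
  show "((\<lambda>h. 2 * h\<^sup>2 * op_sqnorm M (deriv_error F t D h) + 2 * h\<^sup>2 * op_sqnorm M D) \<longlongrightarrow> 0) (at 0)"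
    using has_op_deriv_tendsto[OF F d] by (auto intro!: tendsto_eq_intros)
qed simp

lemma has_op_deriv_diff:
  assumes F: "\<And>s. bounded_op M (F s)" and G: "\<And>s. bounded_op M (G s)"
    and dF: "has_op_deriv M F F' t" and dG: "has_op_deriv M G G' t"
  shows "has_op_deriv M (\<lambda>s. op_diff (F s) (G s)) (op_diff F' G') t"
proof (rule has_op_derivI_bound)
  note F' = has_op_deriv_bounded[OF dF] and G' = has_op_deriv_bounded[OF dG]
  show "\<forall>\<^sub>F h in at 0. op_sqnorm M (deriv_error (\<lambda>s. op_diff (F s) (G s)) t (op_diff F' G') h)
      \<le> 2 * op_sqnorm M (deriv_error F t F' h) + 2 * op_sqnorm M (deriv_error G t G' h)"
  proof (intro always_eventually allI)
    fix h
    have "deriv_error (\<lambda>s. op_diff (F s) (G s)) t (op_diff F' G') h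
        = op_diff (deriv_error F t F' h) (deriv_error G t G' h)"
      by (simp add: deriv_error_def op_diff_def fun_eq_iff diff_divide_distrib)
    then show "op_sqnorm M (deriv_error (\<lambda>s. op_diff (F s) (G s)) t (op_diff F' G') h)
        \<le> 2 * op_sqnorm M (deriv_error F t F' h) + 2 * op_sqnorm M (deriv_error G t G' h)"
      using F G F' G' by (simp add: op_sqnorm_diff_le bounded_op_deriv_error)
  qed
  show "((\<lambda>h. 2 * op_sqnorm M (deriv_error F t F' h) + 2 * op_sqnorm M (deriv_error G t G' h)) \<longlongrightarrow> 0) (at 0)"
    using has_op_deriv_tendsto[OF F dF] has_op_deriv_tendsto[OF G dG] by (auto intro!: tendsto_eq_intros)
qed (use F G has_op_deriv_bounded[OF dF] has_op_deriv_bounded[OF dG] in \<open>simp_all add: bounded_op_diff\<close>)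

lemma op_comp_deriv_error:
  assumes T: "bounded_op M T"
    and G: "bounded_op M (G (t + h))" "bounded_op M (G t)" and G': "bounded_op M G'"
  shows "op_eq M (T \<circ>\<^sub>o deriv_error G t G' h) (deriv_error (\<lambda>s. T \<circ>\<^sub>o G s) t (T \<circ>\<^sub>o G') h)"
  unfolding op_eq_def
proof
  fix u assume u: "u \<in> L2 M"
  define c where "c = 1 / complex_of_real h"
  define v where "v = (\<lambda>y. G (t + h) u y - G t u y)"
  have Gu: "G (t + h) u \<in> L2 M" "G t u \<in> L2 M" using bounded_op_L2[OF G(1) u] bounded_op_L2[OF G(2) u] .
  have v: "v \<in> L2 M" unfolding v_def using L2_diff[OF Gu] .
  have G'u: "G' u \<in> L2 M" using bounded_op_L2[OF G' u] .
  have eq: "deriv_error G t G' h u = (\<lambda>y. c * v y + (-1) * G' u y)"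
    by (simp add: deriv_error_def c_def v_def fun_eq_iff divide_inverse mult.commute)
  have "AE x in M. T (\<lambda>y. c * v y + (-1) * G' u y) x = T (\<lambda>y. c * v y) x + (-1) * T (G' u) x"
    by (rule bounded_op_lincomb_AE[OF T L2_cmult[OF v] G'u])
  moreover have "AE x in M. T (\<lambda>y. c * v y) x = c * T v x"
    by (rule bounded_op_cmult_AE[OF T v])
  moreover have "AE x in M. T v x = T (G (t + h) u) x - T (G t u) x"
    unfolding v_def by (rule bounded_op_diff_AE[OF T Gu])
  ultimately show "AE x in M. (T \<circ>\<^sub>o deriv_error G t G' h) u x = deriv_error (\<lambda>s. T \<circ>\<^sub>o G s) t (T \<circ>\<^sub>o G') h u x"
    unfolding op_comp_def eq
    by eventually_elim (simp add: deriv_error_def c_def divide_inverse mult.commute)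
qed

lemma deriv_error_comp:
  assumes F: "\<And>s. bounded_op M (F s)" and G: "\<And>s. bounded_op M (G s)"
    and F': "bounded_op M F'" and G': "bounded_op M G'"
  shows "op_eq M (deriv_error (\<lambda>s. F s \<circ>\<^sub>o G s) t (op_add (F' \<circ>\<^sub>o G t) (F t \<circ>\<^sub>o G')) h)
    (op_add (op_add (deriv_error F t F' h \<circ>\<^sub>o G (t + h)) (F' \<circ>\<^sub>o op_diff (G (t + h)) (G t)))
      (F t \<circ>\<^sub>o deriv_error G t G' h))"
  unfolding op_eq_def
proof
  fix u assume u: "u \<in> L2 M"
  have "AE x in M. F' (op_diff (G (t + h)) (G t) u) x = F' (G (t + h) u) x - F' (G t u) x"
    unfolding op_diff_def by (rule bounded_op_diff_AE[OF F' bounded_op_L2[OF G u] bounded_op_L2[OF G u]])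
  moreover have "AE x in M. (F t \<circ>\<^sub>o deriv_error G t G' h) u x = deriv_error (\<lambda>s. F t \<circ>\<^sub>o G s) t (F t \<circ>\<^sub>o G') h u x"
    using op_eq_D[OF op_comp_deriv_error[OF F G G G'] u] .
  ultimately show "AE x in M. deriv_error (\<lambda>s. F s \<circ>\<^sub>o G s) t (op_add (F' \<circ>\<^sub>o G t) (F t \<circ>\<^sub>o G')) h u x =
      op_add (op_add (deriv_error F t F' h \<circ>\<^sub>o G (t + h)) (F' \<circ>\<^sub>o op_diff (G (t + h)) (G t)))
        (F t \<circ>\<^sub>o deriv_error G t G' h) u x"
    by eventually_elim
      (simp only: op_add_def op_comp_def, simp add: deriv_error_def diff_divide_distrib)
qed

lemma op_sqnorm_deriv_error_comp_le:
  fixes t h :: real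
  assumes F: "\<And>s. bounded_op M (F s)" and G: "\<And>s. bounded_op M (G s)"
    and F': "bounded_op M F'" and G': "bounded_op M G'"
  defines "E \<equiv> op_diff (G (t + h)) (G t)"
  shows "op_sqnorm M (deriv_error (\<lambda>s. F s \<circ>\<^sub>o G s) t (op_add (F' \<circ>\<^sub>o G t) (F t \<circ>\<^sub>o G')) h)
    \<le> 4 * (op_sqnorm M (deriv_error F t F' h) * (2 * op_sqnorm M E + 2 * op_sqnorm M (G t)))
      + 4 * (op_sqnorm M F' * op_sqnorm M E) + 2 * (op_sqnorm M (F t) * op_sqnorm M (deriv_error G t G' h))"
proof -
  let ?A = "deriv_error F t F' h \<circ>\<^sub>o G (t + h)" and ?B = "F' \<circ>\<^sub>o E" and ?C = "F t \<circ>\<^sub>o deriv_error G t G' h"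
  have E: "bounded_op M E" unfolding E_def by (rule bounded_op_diff[OF G G])
  note b = bounded_op_deriv_error[OF F F F'] bounded_op_deriv_error[OF G G G'] F G F' G' E
  have "op_sqnorm M ?A \<le> op_sqnorm M (deriv_error F t F' h) * op_sqnorm M (G (t + h))"
    by (rule op_sqnorm_comp_le[OF b(1) G])
  also have "\<dots> \<le> op_sqnorm M (deriv_error F t F' h) * (2 * op_sqnorm M E + 2 * op_sqnorm M (G t))"
    using op_sqnorm_add_le[OF E G[of t]] by (intro mult_left_mono) (simp_all add: E_def op_add_def op_diff_def)
  finally have A: "op_sqnorm M ?A \<le> op_sqnorm M (deriv_error F t F' h) * (2 * op_sqnorm M E + 2 * op_sqnorm M (G t))" .
  have bA: "bounded_op M ?A" and bB: "bounded_op M ?B" and bC: "bounded_op M ?C"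
    using b by (simp_all add: bounded_op_comp)
  have "op_sqnorm M (deriv_error (\<lambda>s. F s \<circ>\<^sub>o G s) t (op_add (F' \<circ>\<^sub>o G t) (F t \<circ>\<^sub>o G')) h)
      = op_sqnorm M (op_add (op_add ?A ?B) ?C)"
    unfolding E_def by (rule op_sqnorm_cong[OF deriv_error_comp[OF F G F' G']])
  also have "\<dots> \<le> 2 * op_sqnorm M (op_add ?A ?B) + 2 * op_sqnorm M ?C"
    by (rule op_sqnorm_add_le[OF bounded_op_add[OF bA bB] bC])
  also have "\<dots> \<le> 4 * (op_sqnorm M (deriv_error F t F' h) * (2 * op_sqnorm M E + 2 * op_sqnorm M (G t)))
      + 4 * (op_sqnorm M F' * op_sqnorm M E) + 2 * (op_sqnorm M (F t) * op_sqnorm M (deriv_error G t G' h))"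
    using A op_sqnorm_add_le[OF bA bB] op_sqnorm_comp_le[OF F' E]
      op_sqnorm_comp_le[OF F[of t] bounded_op_deriv_error[OF G[of "t + h"] G[of t] G']]
    by linarith
  finally show ?thesis .
qed

lemma has_op_deriv_comp:
  assumes F: "\<And>s. bounded_op M (F s)" and G: "\<And>s. bounded_op M (G s)"
    and dF: "has_op_deriv M F F' t" and dG: "has_op_deriv M G G' t"
  shows "has_op_deriv M (\<lambda>s. F s \<circ>\<^sub>o G s) (op_add (F' \<circ>\<^sub>o G t) (F t \<circ>\<^sub>o G')) t"
proof (rule has_op_derivI_bound)
  note F' = has_op_deriv_bounded[OF dF] and G' = has_op_deriv_bounded[OF dG]
  show "bounded_op M (op_add (F' \<circ>\<^sub>o G t) (F t \<circ>\<^sub>o G'))"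
    using F G F' G' by (simp add: bounded_op_add bounded_op_comp)
  show "\<forall>\<^sub>F h in at 0. op_sqnorm M (deriv_error (\<lambda>s. F s \<circ>\<^sub>o G s) t (op_add (F' \<circ>\<^sub>o G t) (F t \<circ>\<^sub>o G')) h)
      \<le> 4 * (op_sqnorm M (deriv_error F t F' h) * (2 * op_sqnorm M (op_diff (G (t + h)) (G t)) + 2 * op_sqnorm M (G t)))
        + 4 * (op_sqnorm M F' * op_sqnorm M (op_diff (G (t + h)) (G t)))
        + 2 * (op_sqnorm M (F t) * op_sqnorm M (deriv_error G t G' h))"
    by (intro always_eventually allI op_sqnorm_deriv_error_comp_le F G F' G')
  show "((\<lambda>h. 4 * (op_sqnorm M (deriv_error F t F' h) * (2 * op_sqnorm M (op_diff (G (t + h)) (G t)) + 2 * op_sqnorm M (G t)))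
        + 4 * (op_sqnorm M F' * op_sqnorm M (op_diff (G (t + h)) (G t)))
        + 2 * (op_sqnorm M (F t) * op_sqnorm M (deriv_error G t G' h))) \<longlongrightarrow> 0) (at 0)"
    using has_op_deriv_tendsto[OF F dF] has_op_deriv_tendsto[OF G dG] has_op_deriv_continuous[OF G dG]
    by (auto intro!: tendsto_eq_intros)
qed (use F G in \<open>simp add: bounded_op_comp\<close>)

lemma deriv_error_inv:
  assumes I: "\<And>s. op_invertible M (F s)" and F': "bounded_op M F'" and h: "h \<noteq> 0"
  shows "op_eq M (deriv_error (\<lambda>s. op_inv M (F s)) t (op_neg (op_inv M (F t) \<circ>\<^sub>o F' \<circ>\<^sub>o op_inv M (F t))) h)
    (op_diff (op_inv M (F (t + h)) \<circ>\<^sub>o op_diff (F (t + h)) (F t) \<circ>\<^sub>o op_inv M (F t) \<circ>\<^sub>o F' \<circ>\<^sub>o op_inv M (F t))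
      (op_inv M (F (t + h)) \<circ>\<^sub>o deriv_error F t F' h \<circ>\<^sub>o op_inv M (F t)))"
  unfolding op_eq_def
proof
  note F = bounded_op_if_invertible[OF I] and Fi = bounded_op_inv[OF I]
  note resolvent = op_eq_D[OF resolvent_identity[OF I I, of "t + h" t]]
  fix u assume u: "u \<in> L2 M"
  define w where "w = op_inv M (F t) u"
  have w: "w \<in> L2 M" unfolding w_def using bounded_op_L2[OF Fi u] .
  have F'w: "F' w \<in> L2 M" using bounded_op_L2[OF F' w] .
  define A where "A = deriv_error F t F' h w"
  have A: "A \<in> L2 M" unfolding A_def using bounded_op_L2[OF bounded_op_deriv_error[OF F F F'] w] .
  have "op_diff (F (t + h)) (F t) w = (\<lambda>y. of_real h * A y + of_real h * F' w y)"
    using h by (simp add: A_def deriv_error_def op_diff_def fun_eq_iff field_simps)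
  then have 1: "AE x in M. op_inv M (F (t + h)) (\<lambda>y. of_real h * A y + of_real h * F' w y) x
      = w x - op_inv M (F (t + h)) u x"
    using resolvent[OF u] by (simp add: op_comp_def op_diff_def w_def)
  have 2: "AE x in M. op_inv M (F (t + h)) (op_diff (F (t + h)) (F t) (op_inv M (F t) (F' w))) x
      = op_inv M (F t) (F' w) x - op_inv M (F (t + h)) (F' w) x"
    using resolvent[OF F'w] by (simp add: op_comp_def op_diff_def)
  have 3: "AE x in M. op_inv M (F (t + h)) (\<lambda>y. of_real h * A y + of_real h * F' w y) x
      = of_real h * op_inv M (F (t + h)) A x + of_real h * op_inv M (F (t + h)) (F' w) x"
    using bounded_op_lincomb_AE[OF Fi L2_cmult[OF A] F'w, of "t + h" "of_real h"]
      bounded_op_cmult_AE[OF Fi A, of "t + h" "of_real h"]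
    by eventually_elim simp
  have lhs: "deriv_error (\<lambda>s. op_inv M (F s)) t (op_neg (op_inv M (F t) \<circ>\<^sub>o F' \<circ>\<^sub>o op_inv M (F t))) h u x
      = (op_inv M (F (t + h)) u x - w x) / of_real h + op_inv M (F t) (F' w) x" for x
    by (simp add: deriv_error_def op_neg_def op_comp_def w_def)
  have rhs: "op_diff (op_inv M (F (t + h)) \<circ>\<^sub>o op_diff (F (t + h)) (F t) \<circ>\<^sub>o op_inv M (F t) \<circ>\<^sub>o F' \<circ>\<^sub>o op_inv M (F t))
      (op_inv M (F (t + h)) \<circ>\<^sub>o deriv_error F t F' h \<circ>\<^sub>o op_inv M (F t)) u x
    = op_inv M (F (t + h)) (op_diff (F (t + h)) (F t) (op_inv M (F t) (F' w))) x - op_inv M (F (t + h)) A x" for x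
    by (simp add: op_diff_def op_comp_def w_def A_def)
  from 1 2 3 show "AE x in M.
      deriv_error (\<lambda>s. op_inv M (F s)) t (op_neg (op_inv M (F t) \<circ>\<^sub>o F' \<circ>\<^sub>o op_inv M (F t))) h u x =
      op_diff (op_inv M (F (t + h)) \<circ>\<^sub>o op_diff (F (t + h)) (F t) \<circ>\<^sub>o op_inv M (F t) \<circ>\<^sub>o F' \<circ>\<^sub>o op_inv M (F t))
        (op_inv M (F (t + h)) \<circ>\<^sub>o deriv_error F t F' h \<circ>\<^sub>o op_inv M (F t)) u x"
  proof eventually_elim
    case (elim x)
    then have "(op_inv M (F (t + h)) u x - w x) / of_real h
        = - (op_inv M (F (t + h)) A x + op_inv M (F (t + h)) (F' w) x)"
      using h by (simp add: field_simps)
    then show ?case unfolding lhs rhs elim(2) by simp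
  qed
qed

lemma op_sqnorm_comp_le_mult:
  "op_sqnorm M S \<le> a \<Longrightarrow> bounded_op M S \<Longrightarrow> bounded_op M T \<Longrightarrow> op_sqnorm M (S \<circ>\<^sub>o T) \<le> a * op_sqnorm M T"
  using op_sqnorm_comp_le[of M S T] mult_right_mono[of "op_sqnorm M S" a "op_sqnorm M T"] by simp

lemma eventually_op_sqnorm_inv_le:
  assumes I: "\<And>s. op_invertible M (F s)" and dF: "has_op_deriv M F F' t"
  shows "\<forall>\<^sub>F h in at 0. op_sqnorm M (op_inv M (F (t + h))) \<le> 4 * op_sqnorm M (op_inv M (F t))"
proof -
  define N where "N = op_sqnorm M (op_inv M (F t))"
  have N: "0 \<le> N" by (simp add: N_def)
  have "\<forall>\<^sub>F h in at 0. op_sqnorm M (op_diff (F (t + h)) (F t)) < 1 / (4 * (N + 1))"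
    using N by (intro order_tendstoD(2)[OF has_op_deriv_continuous[OF bounded_op_if_invertible[OF I] dF]]) simp
  then show ?thesis
  proof eventually_elim
    case (elim h)
    have "N * op_sqnorm M (op_diff (F (t + h)) (F t)) \<le> N * (1 / (4 * (N + 1)))"
      using elim N by (intro mult_left_mono) auto
    also have "\<dots> \<le> 1 / 4" using N by (simp add: field_simps)
    finally show ?case unfolding N_def by (rule op_sqnorm_inv_le[OF I I])
  qed
qed

lemma has_op_deriv_inv:
  assumes I: "\<And>s. op_invertible M (F s)" and dF: "has_op_deriv M F F' t"
  shows "has_op_deriv M (\<lambda>s. op_inv M (F s)) (op_neg (op_inv M (F t) \<circ>\<^sub>o F' \<circ>\<^sub>o op_inv M (F t))) t"
proof (rule has_op_derivI_bound)
  note F = bounded_op_if_invertible[OF I] and Fi = bounded_op_inv[OF I]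
    and F' = has_op_deriv_bounded[OF dF]
  define N where "N = op_sqnorm M (op_inv M (F t))"
  define E where "E h = op_diff (F (t + h)) (F t)" for h
  have E: "bounded_op M (E h)" for h unfolding E_def by (rule bounded_op_diff[OF F F])
  have "\<forall>\<^sub>F h in at (0::real). h \<noteq> 0" by (simp add: eventually_at_filter)
  with eventually_op_sqnorm_inv_le[OF I dF] show "\<forall>\<^sub>F h in at 0.
      op_sqnorm M (deriv_error (\<lambda>s. op_inv M (F s)) t (op_neg (op_inv M (F t) \<circ>\<^sub>o F' \<circ>\<^sub>o op_inv M (F t))) h)
      \<le> 2 * (4 * N * op_sqnorm M (E h) * N * op_sqnorm M F' * N)
        + 2 * (4 * N * op_sqnorm M (deriv_error F t F' h) * N)"
  proof eventually_elim
    case (elim h)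
    have "op_sqnorm M (deriv_error (\<lambda>s. op_inv M (F s)) t (op_neg (op_inv M (F t) \<circ>\<^sub>o F' \<circ>\<^sub>o op_inv M (F t))) h)
      = op_sqnorm M (op_diff (op_inv M (F (t + h)) \<circ>\<^sub>o E h \<circ>\<^sub>o op_inv M (F t) \<circ>\<^sub>o F' \<circ>\<^sub>o op_inv M (F t))
          (op_inv M (F (t + h)) \<circ>\<^sub>o deriv_error F t F' h \<circ>\<^sub>o op_inv M (F t)))"
      unfolding E_def by (rule op_sqnorm_cong[OF deriv_error_inv[OF I F' elim(2)]])
    also have "\<dots> \<le> 2 * op_sqnorm M (op_inv M (F (t + h)) \<circ>\<^sub>o E h \<circ>\<^sub>o op_inv M (F t) \<circ>\<^sub>o F' \<circ>\<^sub>o op_inv M (F t))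
        + 2 * op_sqnorm M (op_inv M (F (t + h)) \<circ>\<^sub>o deriv_error F t F' h \<circ>\<^sub>o op_inv M (F t))"
      by (intro op_sqnorm_diff_le bounded_op_comp Fi E F' bounded_op_deriv_error F)
    also have "\<dots> \<le> 2 * (4 * N * op_sqnorm M (E h) * N * op_sqnorm M F' * N)
        + 2 * (4 * N * op_sqnorm M (deriv_error F t F' h) * N)"
      unfolding N_def using elim(1)
      by (intro add_mono mult_left_mono op_sqnorm_comp_le_mult bounded_op_comp Fi E F'
          bounded_op_deriv_error F) simp_all
    finally show ?case .
  qed
  show "((\<lambda>h. 2 * (4 * N * op_sqnorm M (E h) * N * op_sqnorm M F' * N)
        + 2 * (4 * N * op_sqnorm M (deriv_error F t F' h) * N)) \<longlongrightarrow> 0) (at 0)"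
    using has_op_deriv_continuous[OF F dF] has_op_deriv_tendsto[OF F dF] unfolding E_def
    by (auto intro!: tendsto_eq_intros)
qed (use bounded_op_inv[OF I] has_op_deriv_bounded[OF dF] in \<open>simp_all add: bounded_op_neg bounded_op_comp\<close>)

section \<open>Logarithmic derivatives of a shift family\<close>

definition log_deriv :: "complex measure \<Rightarrow> (real \<Rightarrow> op) \<Rightarrow> real \<Rightarrow> op" where
  "log_deriv M F t = op_inv M (F t) \<circ>\<^sub>o op_deriv M F t"

locale toda_family =
  fixes M :: "complex measure" and G :: "int \<Rightarrow> real \<Rightarrow> op" and m :: op
  assumes invertible: "op_invertible M (G k t)"
    and has_op_deriv_G: "has_op_deriv M (G k) (G (k + 1) t) t"
    and bounded_m: "bounded_op M m"
    and recurrence: "op_eq M (G (k + 1) t) (op_diff (m \<circ>\<^sub>o G k t) (G (k - 1) t))"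
begin

abbreviation Ginv :: "int \<Rightarrow> real \<Rightarrow> op" where
  "Ginv k t \<equiv> op_inv M (G k t)"

abbreviation gamma :: "int \<Rightarrow> real \<Rightarrow> op" where
  "gamma k \<equiv> log_deriv M (G k)"

lemma bounded_G: "bounded_op M (G k t)"
  by (rule bounded_op_if_invertible[OF invertible])

lemma bounded_Ginv: "bounded_op M (Ginv k t)"
  by (rule bounded_op_inv[OF invertible])

lemma Ginv_comp_G: "op_eq M (Ginv k t \<circ>\<^sub>o G k t) id"
  by (rule op_inv_comp[OF invertible])

lemma G_comp_Ginv: "op_eq M (G k t \<circ>\<^sub>o Ginv k t) id"
  by (rule op_comp_inv[OF invertible])

lemmas bounded = bounded_G bounded_Ginv bounded_m

lemma gamma_op_eq: "op_eq M (gamma k t) (Ginv k t \<circ>\<^sub>o G (k + 1) t)"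
proof -
  have "op_eq M (op_deriv M (G k) t) (G (k + 1) t)"
    by (rule op_deriv_op_eq[OF bounded_G has_op_deriv_G])
  moreover have "bounded_op M (op_deriv M (G k) t)"
    by (rule has_op_deriv_bounded[OF has_op_deriv_op_deriv[OF has_op_deriv_G]])
  ultimately show ?thesis
    unfolding log_deriv_def using bounded by (intro op_eq_comp_right)
qed

lemma bounded_gamma: "bounded_op M (gamma k t)"
  unfolding log_deriv_def
  by (intro bounded_op_comp bounded_Ginv has_op_deriv_bounded[OF has_op_deriv_op_deriv[OF has_op_deriv_G]])

lemma gamma_invertible: "op_invertible M (gamma k t)"
  and inv_gamma_op_eq: "op_eq M (op_inv M (gamma k t)) (Ginv (k + 1) t \<circ>\<^sub>o G k t)"
proof -
  have left: "op_eq M ((Ginv (k + 1) t \<circ>\<^sub>o G k t) \<circ>\<^sub>o gamma k t) id"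
  proof -
    have "op_eq M ((Ginv (k + 1) t \<circ>\<^sub>o G k t) \<circ>\<^sub>o gamma k t) ((Ginv (k + 1) t \<circ>\<^sub>o G k t) \<circ>\<^sub>o (Ginv k t \<circ>\<^sub>o G (k + 1) t))"
      using bounded bounded_gamma gamma_op_eq by (intro op_eq_comp_right bounded_op_comp)
    also have "op_eq M \<dots> (Ginv (k + 1) t \<circ>\<^sub>o G (k + 1) t)"
      unfolding op_comp_assoc
      by (rule op_comp_cancel_inner[OF bounded_Ginv bounded_G bounded_Ginv bounded_G G_comp_Ginv])
    also have "op_eq M \<dots> id" by (rule Ginv_comp_G)
    finally show ?thesis .
  qed
  have right: "op_eq M (gamma k t \<circ>\<^sub>o (Ginv (k + 1) t \<circ>\<^sub>o G k t)) id"
  proof -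
    have "op_eq M (gamma k t \<circ>\<^sub>o (Ginv (k + 1) t \<circ>\<^sub>o G k t)) ((Ginv k t \<circ>\<^sub>o G (k + 1) t) \<circ>\<^sub>o (Ginv (k + 1) t \<circ>\<^sub>o G k t))"
      using bounded gamma_op_eq by (intro op_eq_comp_left bounded_op_comp)
    also have "op_eq M \<dots> (Ginv k t \<circ>\<^sub>o G k t)"
      unfolding op_comp_assoc
      by (rule op_comp_cancel_inner[OF bounded_Ginv bounded_G bounded_Ginv bounded_G G_comp_Ginv])
    also have "op_eq M \<dots> id" by (rule Ginv_comp_G)
    finally show ?thesis .
  qed
  have S: "bounded_op M (Ginv (k + 1) t \<circ>\<^sub>o G k t)" by (rule bounded_op_comp[OF bounded_Ginv bounded_G])
  show "op_invertible M (gamma k t)" by (rule op_invertibleI[OF bounded_gamma S left right])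
  show "op_eq M (op_inv M (gamma k t)) (Ginv (k + 1) t \<circ>\<^sub>o G k t)"
    by (rule op_inv_unique[OF \<open>op_invertible M (gamma k t)\<close> S left])
qed

lemma has_op_deriv_gamma_expanded:
  "has_op_deriv M (gamma k)
     (op_diff (Ginv k t \<circ>\<^sub>o G (k + 2) t) (Ginv k t \<circ>\<^sub>o G (k + 1) t \<circ>\<^sub>o Ginv k t \<circ>\<^sub>o G (k + 1) t)) t"
proof (rule has_op_deriv_cong)
  show "has_op_deriv M (\<lambda>s. Ginv k s \<circ>\<^sub>o G (k + 1) s)
      (op_add (op_neg (Ginv k t \<circ>\<^sub>o G (k + 1) t \<circ>\<^sub>o Ginv k t) \<circ>\<^sub>o G (k + 1) t) (Ginv k t \<circ>\<^sub>o G (k + 1 + 1) t)) t"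
    by (rule has_op_deriv_comp[OF bounded_Ginv bounded_G has_op_deriv_inv[OF invertible has_op_deriv_G] has_op_deriv_G])
  show "op_eq M (Ginv k s \<circ>\<^sub>o G (k + 1) s) (gamma k s)" for s
    by (rule op_eq_sym[OF gamma_op_eq])
  show "op_eq M (op_add (op_neg (Ginv k t \<circ>\<^sub>o G (k + 1) t \<circ>\<^sub>o Ginv k t) \<circ>\<^sub>o G (k + 1) t) (Ginv k t \<circ>\<^sub>o G (k + 1 + 1) t))
      (op_diff (Ginv k t \<circ>\<^sub>o G (k + 2) t) (Ginv k t \<circ>\<^sub>o G (k + 1) t \<circ>\<^sub>o Ginv k t \<circ>\<^sub>o G (k + 1) t))"
    by (simp add: op_add_def op_neg_def op_diff_def op_comp_def add.assoc)
  show "bounded_op M (op_diff (Ginv k t \<circ>\<^sub>o G (k + 2) t) (Ginv k t \<circ>\<^sub>o G (k + 1) t \<circ>\<^sub>o Ginv k t \<circ>\<^sub>o G (k + 1) t))"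
    using bounded by (intro bounded_op_diff bounded_op_comp)
qed

lemma log_deriv_gamma: "op_eq M (log_deriv M (gamma k) t) (op_diff (gamma (k + 1) t) (gamma k t))"
proof -
  let ?S = "Ginv (k + 1) t \<circ>\<^sub>o G k t"
  let ?X = "Ginv k t \<circ>\<^sub>o G (k + 2) t"
  let ?Y = "Ginv k t \<circ>\<^sub>o G (k + 1) t \<circ>\<^sub>o Ginv k t \<circ>\<^sub>o G (k + 1) t"
  have bS: "bounded_op M ?S" and bX: "bounded_op M ?X" and bY: "bounded_op M ?Y"
    by (intro bounded_op_comp bounded_G bounded_Ginv)+
  have "op_eq M (log_deriv M (gamma k) t) (?S \<circ>\<^sub>o op_diff ?X ?Y)"
    unfolding log_deriv_def[of M "gamma k" t]
    by (rule op_eq_comp[OF bounded_op_inv[OF gamma_invertible] bS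
          has_op_deriv_bounded[OF has_op_deriv_op_deriv[OF has_op_deriv_gamma_expanded]] bounded_op_diff[OF bX bY]
          inv_gamma_op_eq op_deriv_op_eq[OF bounded_gamma has_op_deriv_gamma_expanded]])
  also have "op_eq M \<dots> (op_diff (?S \<circ>\<^sub>o ?X) (?S \<circ>\<^sub>o ?Y))"
    by (rule op_comp_diff[OF bS bX bY])
  also have "op_eq M \<dots> (op_diff (Ginv (k + 1) t \<circ>\<^sub>o G (k + 2) t) (Ginv k t \<circ>\<^sub>o G (k + 1) t))"
  proof (rule op_eq_diff)
    show "op_eq M (?S \<circ>\<^sub>o ?X) (Ginv (k + 1) t \<circ>\<^sub>o G (k + 2) t)"
      unfolding op_comp_assoc
      by (rule op_comp_cancel_inner[OF bounded_Ginv bounded_G bounded_Ginv bounded_G G_comp_Ginv])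
    have "op_eq M (?S \<circ>\<^sub>o ?Y) (Ginv (k + 1) t \<circ>\<^sub>o (G (k + 1) t \<circ>\<^sub>o (Ginv k t \<circ>\<^sub>o G (k + 1) t)))"
      unfolding op_comp_assoc
      by (rule op_comp_cancel_inner[OF bounded_Ginv bounded_G bounded_Ginv _ G_comp_Ginv])
        (intro bounded_op_comp bounded_G bounded_Ginv)
    also have "op_eq M \<dots> (Ginv k t \<circ>\<^sub>o G (k + 1) t)"
      by (rule op_comp_cancel[OF _ Ginv_comp_G])
        (intro bounded_op_comp bounded_G bounded_Ginv)
    finally show "op_eq M (?S \<circ>\<^sub>o ?Y) (Ginv k t \<circ>\<^sub>o G (k + 1) t)" .
  qed
  also have "op_eq M \<dots> (op_diff (gamma (k + 1) t) (gamma k t))"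
    using op_eq_sym[OF gamma_op_eq[of "k + 1" t]] op_eq_sym[OF gamma_op_eq[of k t]]
    by (intro op_eq_diff) (simp_all add: add.assoc)
  finally show ?thesis .
qed

lemma Ginv_comp_G_add_2:
  "op_eq M (Ginv k t \<circ>\<^sub>o G (k + 2) t) (op_diff (Ginv k t \<circ>\<^sub>o (m \<circ>\<^sub>o G (k + 1) t)) id)"
proof -
  have mG: "bounded_op M (m \<circ>\<^sub>o G (k + 1) t)" by (rule bounded_op_comp[OF bounded_m bounded_G])
  have "op_eq M (Ginv k t \<circ>\<^sub>o G (k + 2) t) (Ginv k t \<circ>\<^sub>o op_diff (m \<circ>\<^sub>o G (k + 1) t) (G k t))"
    using recurrence[of "k + 1" t]
    by (intro op_eq_comp_right[OF bounded_Ginv bounded_G bounded_op_diff[OF mG bounded_G]])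
      (simp add: add.assoc)
  also have "op_eq M \<dots> (op_diff (Ginv k t \<circ>\<^sub>o (m \<circ>\<^sub>o G (k + 1) t)) (Ginv k t \<circ>\<^sub>o G k t))"
    by (rule op_comp_diff[OF bounded_Ginv mG bounded_G])
  also have "op_eq M \<dots> (op_diff (Ginv k t \<circ>\<^sub>o (m \<circ>\<^sub>o G (k + 1) t)) id)"
    by (rule op_eq_diff[OF op_eq_refl Ginv_comp_G])
  finally show ?thesis .
qed

lemma G_succ_comp_Ginv:
  "op_eq M (G (k + 1) t \<circ>\<^sub>o Ginv k t) (op_diff m (G (k - 1) t \<circ>\<^sub>o Ginv k t))"
proof -
  have "op_eq M (G (k + 1) t \<circ>\<^sub>o Ginv k t) (op_diff (m \<circ>\<^sub>o G k t) (G (k - 1) t) \<circ>\<^sub>o Ginv k t)"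
    by (rule op_eq_comp_left[OF recurrence bounded_Ginv])
  also have "op_diff (m \<circ>\<^sub>o G k t) (G (k - 1) t) \<circ>\<^sub>o Ginv k t
      = op_diff (m \<circ>\<^sub>o (G k t \<circ>\<^sub>o Ginv k t)) (G (k - 1) t \<circ>\<^sub>o Ginv k t)"
    by (simp add: op_diff_comp op_comp_assoc)
  also have "op_eq M \<dots> (op_diff (m \<circ>\<^sub>o id) (G (k - 1) t \<circ>\<^sub>o Ginv k t))"
    by (rule op_eq_diff[OF op_eq_comp_right[OF bounded_m _ bounded_op_id G_comp_Ginv] op_eq_refl])
      (rule bounded_op_comp[OF bounded_G bounded_Ginv])
  finally show ?thesis by simp
qed

lemma deriv_gamma_op_eq:
  "op_eq M (op_diff (Ginv k t \<circ>\<^sub>o G (k + 2) t) (Ginv k t \<circ>\<^sub>o G (k + 1) t \<circ>\<^sub>o Ginv k t \<circ>\<^sub>o G (k + 1) t))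
     (op_diff (Ginv k t \<circ>\<^sub>o G (k - 1) t \<circ>\<^sub>o Ginv k t \<circ>\<^sub>o G (k + 1) t) id)"
proof -
  let ?X = "Ginv k t \<circ>\<^sub>o (m \<circ>\<^sub>o G (k + 1) t)"
  let ?Z = "Ginv k t \<circ>\<^sub>o G (k - 1) t \<circ>\<^sub>o Ginv k t \<circ>\<^sub>o G (k + 1) t"
  have "op_eq M (Ginv k t \<circ>\<^sub>o G (k + 1) t \<circ>\<^sub>o Ginv k t \<circ>\<^sub>o G (k + 1) t)
      ((Ginv k t \<circ>\<^sub>o op_diff m (G (k - 1) t \<circ>\<^sub>o Ginv k t)) \<circ>\<^sub>o G (k + 1) t)"
    unfolding op_comp_assoc[of "Ginv k t" "G (k + 1) t" "Ginv k t"]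
    by (rule op_eq_comp_left[OF op_eq_comp_right[OF bounded_Ginv _ _ G_succ_comp_Ginv] bounded_G])
      (intro bounded_op_comp bounded_op_diff bounded)+
  also have "op_eq M \<dots> (op_diff (Ginv k t \<circ>\<^sub>o m) (Ginv k t \<circ>\<^sub>o (G (k - 1) t \<circ>\<^sub>o Ginv k t)) \<circ>\<^sub>o G (k + 1) t)"
    by (rule op_eq_comp_left[OF op_comp_diff[OF bounded_Ginv bounded_m] bounded_G])
      (rule bounded_op_comp[OF bounded_G bounded_Ginv])
  also have "\<dots> = op_diff ?X ?Z"
    by (simp add: op_diff_comp op_comp_assoc)
  finally have "op_eq M (Ginv k t \<circ>\<^sub>o G (k + 1) t \<circ>\<^sub>o Ginv k t \<circ>\<^sub>o G (k + 1) t) (op_diff ?X ?Z)" .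
  from op_eq_diff[OF Ginv_comp_G_add_2 this]
  have "op_eq M (op_diff (Ginv k t \<circ>\<^sub>o G (k + 2) t) (Ginv k t \<circ>\<^sub>o G (k + 1) t \<circ>\<^sub>o Ginv k t \<circ>\<^sub>o G (k + 1) t))
      (op_diff (op_diff ?X id) (op_diff ?X ?Z))" .
  moreover have "op_diff (op_diff ?X id) (op_diff ?X ?Z) = op_diff ?Z id"
    by (simp add: op_diff_def fun_eq_iff)
  ultimately show ?thesis by simp
qed

lemma has_op_deriv_gamma:
  "has_op_deriv M (gamma k) (op_diff (op_inv M (gamma (k - 1) t) \<circ>\<^sub>o gamma k t) id) t"
proof (rule has_op_deriv_cong[OF has_op_deriv_gamma_expanded op_eq_refl])
  have "op_eq M ((Ginv k t \<circ>\<^sub>o G (k - 1) t) \<circ>\<^sub>o (Ginv k t \<circ>\<^sub>o G (k + 1) t)) (op_inv M (gamma (k - 1) t) \<circ>\<^sub>o gamma k t)"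
    using op_eq_sym[OF inv_gamma_op_eq[of "k - 1" t]] op_eq_sym[OF gamma_op_eq[of k t]]
    by (intro op_eq_comp bounded_op_comp bounded_G bounded_Ginv bounded_gamma bounded_op_inv[OF gamma_invertible]) simp_all
  then have "op_eq M (op_diff (Ginv k t \<circ>\<^sub>o G (k - 1) t \<circ>\<^sub>o Ginv k t \<circ>\<^sub>o G (k + 1) t) id)
      (op_diff (op_inv M (gamma (k - 1) t) \<circ>\<^sub>o gamma k t) id)"
    by (intro op_eq_diff op_eq_refl) (simp add: op_comp_assoc)
  with deriv_gamma_op_eq show "op_eq M
      (op_diff (Ginv k t \<circ>\<^sub>o G (k + 2) t) (Ginv k t \<circ>\<^sub>o G (k + 1) t \<circ>\<^sub>o Ginv k t \<circ>\<^sub>o G (k + 1) t))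
      (op_diff (op_inv M (gamma (k - 1) t) \<circ>\<^sub>o gamma k t) id)"
    by (rule op_eq_trans)
  show "bounded_op M (op_diff (op_inv M (gamma (k - 1) t) \<circ>\<^sub>o gamma k t) id)"
    by (intro bounded_op_diff bounded_op_comp bounded_op_id bounded_gamma bounded_op_inv[OF gamma_invertible])
qed

theorem toda_equation:
  "op_invertible M (gamma k t) \<and> has_op_deriv M (gamma k) (op_deriv M (gamma k) t) t
    \<and> (\<exists>D. has_op_deriv M (log_deriv M (gamma k)) D t
        \<and> op_eq M D (op_diff (op_inv M (gamma k t) \<circ>\<^sub>o gamma (k + 1) t) (op_inv M (gamma (k - 1) t) \<circ>\<^sub>o gamma k t)))"
proof (intro conjI exI)
  show "op_invertible M (gamma k t)" by (rule gamma_invertible)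
  show "has_op_deriv M (gamma k) (op_deriv M (gamma k) t) t"
    by (rule has_op_deriv_op_deriv[OF has_op_deriv_gamma])
  let ?D = "\<lambda>j. op_diff (op_inv M (gamma (j - 1) t) \<circ>\<^sub>o gamma j t) id"
  show "has_op_deriv M (log_deriv M (gamma k)) (op_diff (?D (k + 1)) (?D k)) t"
    by (rule has_op_deriv_cong[OF has_op_deriv_diff[OF bounded_gamma bounded_gamma has_op_deriv_gamma has_op_deriv_gamma]
          op_eq_sym[OF log_deriv_gamma] op_eq_refl])
      (intro bounded_op_diff bounded_op_comp bounded_op_id bounded_gamma bounded_op_inv[OF gamma_invertible])
  show "op_eq M (op_diff (?D (k + 1)) (?D k))
      (op_diff (op_inv M (gamma k t) \<circ>\<^sub>o gamma (k + 1) t) (op_inv M (gamma (k - 1) t) \<circ>\<^sub>o gamma k t))"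
    by (simp add: op_diff_def)
qed

end

section \<open>Multiplication operators\<close>

lemma measurable_powi [measurable]: "(\<lambda>x::complex. x powi k) \<in> borel_measurable borel"
  unfolding power_int_def by measurable

lemma measurable_exp_complex [measurable]: "(exp :: complex \<Rightarrow> complex) \<in> borel_measurable borel"
  by (intro borel_measurable_continuous_onI continuous_intros)

lemma mult_op_L2:
  assumes f: "f \<in> borel_measurable M" and bound: "AE x in M. cmod (f x) \<le> K" and u: "u \<in> L2 M"
  shows "mult_op f u \<in> L2 M" and "sqnorm M (mult_op f u) \<le> K\<^sup>2 * sqnorm M u"
proof -
  have "l2n M (mult_op f u) \<le> (\<integral>\<^sup>+ x. ennreal (K\<^sup>2) * ennreal ((cmod (u x))\<^sup>2) \<partial>M)"
    unfolding l2n_def mult_op_def using bound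
  proof (intro nn_integral_mono_AE, eventually_elim)
    case (elim x)
    have "(cmod (f x * u x))\<^sup>2 \<le> K\<^sup>2 * (cmod (u x))\<^sup>2"
      unfolding norm_mult power_mult_distrib
      using elim by (intro mult_right_mono power_mono) auto
    then show ?case by (simp add: ennreal_mult[symmetric] ennreal_leI)
  qed
  also have "\<dots> = ennreal (K\<^sup>2) * l2n M u"
    unfolding l2n_def using L2_measurable[OF u] by (simp add: nn_integral_cmult)
  finally have le: "l2n M (mult_op f u) \<le> ennreal (K\<^sup>2) * l2n M u" .
  have "l2n M (mult_op f u) < \<infinity>"
    using le u by (simp add: L2_iff) (metis ennreal_mult_less_top ennreal_less_top le_less_trans)
  moreover have "mult_op f u \<in> borel_measurable M"
    unfolding mult_op_def using f L2_measurable[OF u] by measurable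
  ultimately show L: "mult_op f u \<in> L2 M" by (simp add: L2_iff)
  have "ennreal (sqnorm M (mult_op f u)) \<le> ennreal (K\<^sup>2 * sqnorm M u)"
    using le L u by (simp add: l2n_eq_sqnorm ennreal_mult)
  then show "sqnorm M (mult_op f u) \<le> K\<^sup>2 * sqnorm M u" by (subst (asm) ennreal_le_iff) auto
qed

lemma bounded_op_mult_op:
  assumes "f \<in> borel_measurable M" "AE x in M. cmod (f x) \<le> K"
  shows "bounded_op M (mult_op f)"
  by (rule bounded_opI[OF mult_op_L2(1)[OF assms] _ _ mult_op_L2(2)[OF assms]])
    (simp_all add: mult_op_def algebra_simps)

lemma op_sqnorm_mult_op_le:
  assumes "f \<in> borel_measurable M" "AE x in M. cmod (f x) \<le> K"
  shows "op_sqnorm M (mult_op f) \<le> K\<^sup>2"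
  by (rule op_sqnorm_le[OF mult_op_L2(1)[OF assms] zero_le_power2 mult_op_L2(2)[OF assms]])

section \<open>The measure mu\<close>

lemma sets_mu_meas: "sets (mu_meas \<sigma>) = sets borel"
  unfolding mu_meas_def using sets.sigma_sets_eq[of borel] by (simp add: sets_measure_of_conv)

lemma supp_meas_complement_null:
  fixes \<sigma> :: "real measure"
  assumes s: "sets \<sigma> = sets borel"
  shows "\<exists>U. U \<in> null_sets \<sigma> \<and> open U \<and> - supp_meas \<sigma> \<subseteq> U"
proof -
  define F where "F = {ball x e | x e. 0 < e \<and> emeasure \<sigma> (ball x e) = 0}"
  have "\<And>S. S \<in> F \<Longrightarrow> open S" unfolding F_def by auto
  then obtain F' where F': "F' \<subseteq> F" "countable F'" "\<Union>F' = \<Union>F" by (rule Lindelof)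
  have null: "S \<in> null_sets \<sigma>" if "S \<in> F" for S
  proof -
    from that obtain x e where S: "S = ball x e" "emeasure \<sigma> (ball x e) = 0" unfolding F_def by blast
    have "S \<in> sets \<sigma>" unfolding s S(1) by (rule borel_open) simp
    then show ?thesis using S by (simp add: null_sets_def)
  qed
  have U: "(\<Union>S\<in>F'. S) \<in> null_sets \<sigma>" by (rule null_sets_UN'[OF F'(2)]) (use F'(1) null in blast)
  have op: "open (\<Union>F')" using F'(1) \<open>\<And>S. S \<in> F \<Longrightarrow> open S\<close> by auto
  have sub: "- supp_meas \<sigma> \<subseteq> \<Union>F"
  proof
    fix x assume "x \<in> - supp_meas \<sigma>"
    then obtain e where e: "0 < e" "\<not> emeasure \<sigma> (ball x e) > 0" by (auto simp: supp_meas_def)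
    then have "emeasure \<sigma> (ball x e) = 0" by (simp add: not_gr_zero)
    then have "ball x e \<in> F" using e unfolding F_def by blast
    moreover have "x \<in> ball x e" using e by simp
    ultimately show "x \<in> \<Union>F" by blast
  qed
  show ?thesis using U op sub F'(3) by (intro exI[of _ "\<Union>F'"]) auto
qed

lemma AE_mu_meas:
  fixes \<sigma> :: "real measure"
  assumes s: "sets \<sigma> = sets borel"
  shows "AE z in mu_meas \<sigma>. cmod z = 1 \<or> (Im z = 0 \<and> Re z \<in> supp_meas \<sigma>)"
proof -
  obtain U where U: "U \<in> null_sets \<sigma>" "open U" "- supp_meas \<sigma> \<subseteq> U" using supp_meas_complement_null[OF s] by blast
  define N where "N = - {z::complex. cmod z = 1} \<inter> ({z. Im z \<noteq> 0} \<union> Re -` U)"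
  have oN: "open N"
  proof -
    have "closed {z::complex. cmod z = 1}" by (intro closed_Collect_eq continuous_intros)
    moreover have "open {z::complex. Im z \<noteq> 0}" by (intro open_Collect_neq continuous_intros)
    moreover have "open (Re -` U)" using U(2) by (intro open_vimage continuous_intros)
    ultimately show ?thesis unfolding N_def by auto
  qed
  have Nb: "N \<in> sets (mu_meas \<sigma>)" using oN by (simp add: sets_mu_meas)
  define f where "f = (\<lambda>A. emeasure \<sigma> (complex_of_real -` A)
          + emeasure lborel {\<theta> \<in> {-pi..pi}. cis \<theta> \<in> A} / ennreal pi)"
  have fN: "f N = 0"
  proof -
    have "complex_of_real -` N \<subseteq> U" unfolding N_def by auto
    then have "emeasure \<sigma> (complex_of_real -` N) \<le> emeasure \<sigma> U"
      using U(1) by (intro emeasure_mono) auto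
    then have 1: "emeasure \<sigma> (complex_of_real -` N) = 0" using U(1) by auto
    have e: "{\<theta> \<in> {-pi..pi}. cis \<theta> \<in> N} = {}" unfolding N_def by auto
    show ?thesis unfolding f_def e 1 by simp
  qed
  have "emeasure (mu_meas \<sigma>) N = 0"
    unfolding mu_meas_def emeasure_measure_of_conv using fN f_def by simp
  then have "N \<in> null_sets (mu_meas \<sigma>)" using Nb by (intro null_setsI)
  moreover have "{z \<in> space (mu_meas \<sigma>). \<not> (cmod z = 1 \<or> (Im z = 0 \<and> Re z \<in> supp_meas \<sigma>))} \<subseteq> N"
    unfolding N_def using U(3) by auto
  ultimately show ?thesis by (rule AE_I')
qed

lemma AE_mu_meas_bounded:
  fixes \<sigma> :: "real measure"
  assumes "sets \<sigma> = sets borel" and "0 \<notin> supp_meas \<sigma>"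
    and "\<forall>x\<in>supp_meas \<sigma>. \<bar>x\<bar> \<le> c \<and> 1 / \<bar>x\<bar> \<le> c"
  shows "AE z in mu_meas \<sigma>. z \<noteq> 0 \<and> cmod z \<le> max c 1 \<and> cmod (1 / z) \<le> max c 1"
  using AE_mu_meas[OF assms(1)]
proof eventually_elim
  case (elim z)
  show ?case
  proof (cases "cmod z = 1")
    case False
    then have z: "z = complex_of_real (Re z)" "Re z \<in> supp_meas \<sigma>"
      using elim by (auto simp: complex_eq_iff)
    then have "Re z \<noteq> 0" "\<bar>Re z\<bar> \<le> c" "1 / \<bar>Re z\<bar> \<le> c" using assms(2,3) by auto
    then show ?thesis by (subst (1 2 3) z(1)) (auto simp: norm_divide)
  qed (auto simp: norm_divide)
qed

locale annular_measure =
  fixes M :: "complex measure" and R :: real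
  assumes sets_eq: "sets M = sets borel" and R: "1 \<le> R"
    and AE_bounded: "AE z in M. z \<noteq> 0 \<and> cmod z \<le> R \<and> cmod (1 / z) \<le> R"
begin

lemma borel_measurable_iff: "f \<in> borel_measurable M \<longleftrightarrow> f \<in> borel_measurable borel"
  by (simp add: measurable_cong_sets[OF sets_eq refl])

lemma bounded_op_mult_op_add_inverse: "bounded_op M (mult_op (\<lambda>\<beta>. \<beta> + 1 / \<beta>))"
proof (rule bounded_op_mult_op)
  show "(\<lambda>\<beta>. \<beta> + 1 / \<beta>) \<in> borel_measurable M" by (simp add: borel_measurable_iff)
  show "AE \<beta> in M. cmod (\<beta> + 1 / \<beta>) \<le> 2 * R"
    using AE_bounded by eventually_elim (auto intro: norm_triangle_le)
qed

end

lemma annular_measure_mu_meas: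
  assumes "sets \<sigma> = sets borel" "0 \<notin> supp_meas \<sigma>" "\<forall>x\<in>supp_meas \<sigma>. \<bar>x\<bar> \<le> c \<and> 1 / \<bar>x\<bar> \<le> c"
  shows "annular_measure (mu_meas \<sigma>) (max c 1)"
  using AE_mu_meas_bounded[OF assms] by unfold_locales (simp_all add: sets_mu_meas)

section \<open>The operators Gam\<close>

lemma norm_exp_minus_1_minus_le: "cmod (exp w - 1 - w) \<le> (cmod w)\<^sup>2 * exp (cmod w)"
proof -
  define a where "a n = inverse (fact (n + 2)) *\<^sub>R w ^ (n + 2)" for n
  define b where "b n = (cmod w)\<^sup>2 * (inverse (fact n) * cmod w ^ n)" for n
  have ab: "norm (a n) \<le> b n" for n
  proof -
    have "norm (a n) = (cmod w)\<^sup>2 * (cmod w ^ n / fact (n + 2))"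
      unfolding a_def norm_scaleR power_add by (simp add: norm_mult norm_power divide_inverse ac_simps)
    also have "\<dots> \<le> (cmod w)\<^sup>2 * (cmod w ^ n / fact n)"
      by (intro mult_left_mono divide_left_mono fact_mono) auto
    finally show ?thesis by (simp add: b_def field_simps)
  qed
  have "exp w - 1 - w = suminf a"
    unfolding a_def using exp_first_two_terms[of w] by (simp add: algebra_simps)
  also have "cmod \<dots> \<le> suminf b"
    by (rule norm_suminf_le[OF ab]) (unfold b_def, intro summable_mult summable_exp)
  also have "suminf b = (cmod w)\<^sup>2 * exp (cmod w)"
    unfolding b_def using suminf_mult[OF summable_exp[of "cmod w"], of "(cmod w)\<^sup>2"]
    by (simp add: exp_def divide_inverse mult.commute)
  finally show ?thesis .
qed

definition exp_deriv_error :: "complex \<Rightarrow> real \<Rightarrow> real \<Rightarrow> complex" where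
  "exp_deriv_error z t h =
     (exp (z * of_real (t + h)) - exp (z * of_real t)) / of_real h - z * exp (z * of_real t)"

lemma norm_exp_deriv_error_le:
  assumes z: "cmod z \<le> R" and h: "h \<noteq> 0" "\<bar>h\<bar> \<le> 1"
  shows "cmod (exp_deriv_error z t h) \<le> R\<^sup>2 * \<bar>h\<bar> * exp (R * \<bar>t\<bar>) * exp R"
proof -
  define w where "w = z * of_real h"
  have "exp_deriv_error z t h = exp (z * of_real t) * (exp w - 1 - w) / of_real h"
    using h by (simp add: exp_deriv_error_def w_def field_simps exp_add[symmetric] distrib_left)
  also have "cmod \<dots> \<le> exp (R * \<bar>t\<bar>) * (R\<^sup>2 * h\<^sup>2 * exp R) / \<bar>h\<bar>"
    unfolding norm_divide norm_mult norm_of_real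
  proof (intro divide_right_mono mult_mono)
    have "cmod (exp (z * of_real t)) \<le> exp (cmod z * \<bar>t\<bar>)"
      using norm_exp[of "z * of_real t"] by (simp add: norm_mult)
    also have "\<dots> \<le> exp (R * \<bar>t\<bar>)" using z by (simp add: mult_right_mono)
    finally show "cmod (exp (z * of_real t)) \<le> exp (R * \<bar>t\<bar>)" .
    have "cmod w \<le> R"
      using z h mult_mono[of "cmod z" R "\<bar>h\<bar>" 1] order_trans[OF norm_ge_zero z]
      by (simp add: w_def norm_mult)
    moreover have "(cmod w)\<^sup>2 \<le> R\<^sup>2 * h\<^sup>2"
      using z by (simp add: w_def norm_mult power_mult_distrib mult_right_mono power_mono)
    ultimately show "cmod (exp w - 1 - w) \<le> R\<^sup>2 * h\<^sup>2 * exp R"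
      using norm_exp_minus_1_minus_le[of w] by (meson exp_le_cancel_iff exp_ge_zero mult_mono order_trans zero_le_power2)
  qed auto
  also have "\<dots> = R\<^sup>2 * \<bar>h\<bar> * exp (R * \<bar>t\<bar>) * exp R"
    using h by (simp add: power2_eq_square field_simps)
  finally show ?thesis .
qed

lemma powi_succ_add_powi_pred:
  fixes x :: "'a::field"
  assumes "x \<noteq> 0"
  shows "x powi (n + 1) + x powi (n - 1) = (x + 1 / x) * x powi n"
  using assms by (simp add: power_int_add power_int_diff field_simps)

lemma norm_powi_le:
  fixes x :: complex
  assumes "cmod x \<le> R" "cmod (1 / x) \<le> R" "1 \<le> R" "nat \<bar>n\<bar> \<le> N"
  shows "cmod (x powi n) \<le> R ^ N"
proof -
  have "cmod (x powi n) \<le> R ^ nat \<bar>n\<bar>"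
  proof (cases "0 \<le> n")
    case True
    then show ?thesis using assms by (simp add: power_int_def norm_power power_mono)
  next
    case False
    then show ?thesis using assms
      by (simp add: power_int_def norm_power norm_inverse divide_inverse power_mono)
  qed
  also have "\<dots> \<le> R ^ N" using assms by (intro power_increasing) auto
  finally show ?thesis .
qed

definition Gam_op :: "op \<Rightarrow> int \<Rightarrow> real \<Rightarrow> op" where
  "Gam_op C k t = op_add (mult_op (\<lambda>\<beta>. \<beta> powi (k + 2) * exp (\<beta> * complex_of_real t)))
     (mult_op (\<lambda>\<beta>. \<beta> powi (- k) * exp (complex_of_real t / \<beta>)) \<circ>\<^sub>o C)"

lemma Gam_eq_Gam_op: "Gam \<sigma> s \<rho> rh = Gam_op (C2 \<sigma> s \<rho> rh)"
  by (simp add: fun_eq_iff Gam_def Gam_op_def op_add_def)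

context annular_measure
begin

lemma bounded_op_Gam_op:
  assumes C: "bounded_op M C"
  shows "bounded_op M (Gam_op C k t)"
proof -
  have "AE z in M. cmod (z powi n * exp (w z * complex_of_real t)) \<le> R ^ nat \<bar>n\<bar> * exp (R * \<bar>t\<bar>)"
    if w: "\<And>z. z \<noteq> 0 \<Longrightarrow> cmod z \<le> R \<Longrightarrow> cmod (1 / z) \<le> R \<Longrightarrow> cmod (w z) \<le> R" for w n
    using AE_bounded
  proof eventually_elim
    case (elim z)
    have "cmod (exp (w z * complex_of_real t)) \<le> exp (R * \<bar>t\<bar>)"
      using norm_exp[of "w z * complex_of_real t"] w[of z] elim
      by (simp add: norm_mult) (meson abs_ge_zero mult_right_mono order_trans)
    then show ?case unfolding norm_mult using elim R
      by (intro mult_mono norm_powi_le) auto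
  qed
  from this[of "\<lambda>z. z" "k + 2"] this[of "\<lambda>z. 1 / z" "- k"] show ?thesis
    unfolding Gam_op_def
    by (intro bounded_op_add bounded_op_comp C bounded_op_mult_op) (auto simp: borel_measurable_iff)
qed

lemma deriv_error_Gam_op:
  "op_eq M (deriv_error (Gam_op C k) t (Gam_op C (k + 1) t) h)
     (op_add (mult_op (\<lambda>\<beta>. \<beta> powi (k + 2) * exp_deriv_error \<beta> t h))
        (mult_op (\<lambda>\<beta>. \<beta> powi (- k) * exp_deriv_error (1 / \<beta>) t h) \<circ>\<^sub>o C))"
  unfolding op_eq_def
proof
  fix u
  show "AE x in M. deriv_error (Gam_op C k) t (Gam_op C (k + 1) t) h u x =
      op_add (mult_op (\<lambda>\<beta>. \<beta> powi (k + 2) * exp_deriv_error \<beta> t h))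
        (mult_op (\<lambda>\<beta>. \<beta> powi (- k) * exp_deriv_error (1 / \<beta>) t h) \<circ>\<^sub>o C) u x"
    using AE_bounded
  proof eventually_elim
    case (elim x)
    have "x powi (k + 2 + 1) = x powi (k + 2) * x" using elim by (intro power_int_add_1) simp
    moreover have "x powi (- (k + 1)) = x powi (- k) * (1 / x)"
      unfolding minus_add_distrib diff_conv_add_uminus[symmetric] using elim by (subst power_int_diff) auto
    ultimately show ?case
      by (simp add: Gam_op_def deriv_error_def exp_deriv_error_def op_add_def op_comp_def mult_op_def
          divide_inverse algebra_simps)
  qed
qed

lemma has_op_deriv_Gam_op:
  assumes C: "bounded_op M C"
  shows "has_op_deriv M (Gam_op C k) (Gam_op C (k + 1) t) t"
proof (rule has_op_derivI_bound)
  define P where "P h = R ^ (nat \<bar>k\<bar> + 2) * (R\<^sup>2 * \<bar>h\<bar> * exp (R * \<bar>t\<bar>) * exp R)" for h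
  have multiplier_bound: "AE x in M. cmod (x powi n * exp_deriv_error (w x) t h) \<le> P h"
    if n: "nat \<bar>n\<bar> \<le> nat \<bar>k\<bar> + 2" and h: "h \<noteq> 0" "\<bar>h\<bar> \<le> 1"
      and w: "\<And>z. z \<noteq> 0 \<Longrightarrow> cmod z \<le> R \<Longrightarrow> cmod (1 / z) \<le> R \<Longrightarrow> cmod (w z) \<le> R" for n w h
    using AE_bounded
  proof eventually_elim
    case (elim x)
    then show ?case unfolding P_def norm_mult using R n h w[of x]
      by (intro mult_mono norm_powi_le norm_exp_deriv_error_le) auto
  qed
  have "\<forall>\<^sub>F h in at (0::real). h \<noteq> 0 \<and> \<bar>h\<bar> \<le> 1"
    by (auto simp: eventually_at intro!: exI[of _ 1])
  then show "\<forall>\<^sub>F h in at 0. op_sqnorm M (deriv_error (Gam_op C k) t (Gam_op C (k + 1) t) h)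
      \<le> 2 * (P h)\<^sup>2 + 2 * ((P h)\<^sup>2 * op_sqnorm M C)"
  proof eventually_elim
    case (elim h)
    let ?a = "\<lambda>\<beta>. \<beta> powi (k + 2) * exp_deriv_error \<beta> t h"
    let ?b = "\<lambda>\<beta>. \<beta> powi (- k) * exp_deriv_error (1 / \<beta>) t h"
    have meas: "?a \<in> borel_measurable M" "?b \<in> borel_measurable M"
      by (simp_all add: borel_measurable_iff exp_deriv_error_def)
    have a: "AE x in M. cmod (?a x) \<le> P h" by (rule multiplier_bound) (use elim in auto)
    have b: "AE x in M. cmod (?b x) \<le> P h" by (rule multiplier_bound) (use elim in auto)
    have "op_sqnorm M (deriv_error (Gam_op C k) t (Gam_op C (k + 1) t) h)
        = op_sqnorm M (op_add (mult_op ?a) (mult_op ?b \<circ>\<^sub>o C))"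
      by (rule op_sqnorm_cong[OF deriv_error_Gam_op])
    also have "\<dots> \<le> 2 * op_sqnorm M (mult_op ?a) + 2 * op_sqnorm M (mult_op ?b \<circ>\<^sub>o C)"
      using meas a b C by (intro op_sqnorm_add_le bounded_op_comp bounded_op_mult_op)
    also have "\<dots> \<le> 2 * (P h)\<^sup>2 + 2 * ((P h)\<^sup>2 * op_sqnorm M C)"
      using meas a b C
      by (intro add_mono mult_left_mono op_sqnorm_mult_op_le op_sqnorm_comp_le_mult bounded_op_mult_op) auto
    finally show ?case .
  qed
  show "((\<lambda>h. 2 * (P h)\<^sup>2 + 2 * ((P h)\<^sup>2 * op_sqnorm M C)) \<longlongrightarrow> 0) (at 0)"
    unfolding P_def by (auto intro!: tendsto_eq_intros)
qed (use C in \<open>simp_all add: bounded_op_Gam_op\<close>)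

lemma Gam_op_recurrence:
  "op_eq M (Gam_op C (k + 1) t) (op_diff (mult_op (\<lambda>\<beta>. \<beta> + 1 / \<beta>) \<circ>\<^sub>o Gam_op C k t) (Gam_op C (k - 1) t))"
  unfolding op_eq_def
proof
  fix u
  show "AE x in M. Gam_op C (k + 1) t u x
      = op_diff (mult_op (\<lambda>\<beta>. \<beta> + 1 / \<beta>) \<circ>\<^sub>o Gam_op C k t) (Gam_op C (k - 1) t) u x"
    using AE_bounded
  proof eventually_elim
    case (elim x)
    then have x: "x \<noteq> 0" by simp
    have p1: "x powi (k + 1 + 2) = (x + 1 / x) * x powi (k + 2) - x powi (k - 1 + 2)"
      using powi_succ_add_powi_pred[OF x, of "k + 2"] by (simp add: algebra_simps)
    have p2: "x powi (- (k + 1)) = (x + 1 / x) * x powi (- k) - x powi (- (k - 1))"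
    proof -
      have "- (k + 1) = - k - 1" "- (k - 1) = - k + 1" by simp_all
      then have "x powi (- (k + 1)) + x powi (- (k - 1)) = (x + 1 / x) * x powi (- k)"
        using powi_succ_add_powi_pred[OF x, of "- k"] by (simp only: add.commute)
      then show ?thesis by (simp only: eq_diff_eq)
    qed
    show ?case
      unfolding Gam_op_def op_add_def op_diff_def op_comp_def mult_op_def p1 p2
      by (simp add: algebra_simps)
  qed
qed


lemma toda_family_Gam_op:
  assumes "\<And>k t. op_invertible M (Gam_op C k t)" and "bounded_op M C"
  shows "toda_family M (Gam_op C) (mult_op (\<lambda>\<beta>. \<beta> + 1 / \<beta>))"
  using assms by unfold_locales
    (simp_all add: has_op_deriv_Gam_op bounded_op_mult_op_add_inverse Gam_op_recurrence)

end

theorem lemma1: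
  fixes \<sigma> :: "real measure"
    and \<rho> rh :: "complex \<Rightarrow> complex"
    and s :: "real \<Rightarrow> real"
  defines "\<mu> \<equiv> mu_meas \<sigma>"
  assumes sigma_borel: "sets \<sigma> = sets borel"
    and sigma_zero: "emeasure \<sigma> {0} = 0"
    and supp_inv: "\<And>x. x \<in> supp_meas \<sigma> \<Longrightarrow> x \<noteq> 0 \<and> 1 / x \<in> supp_meas \<sigma>"
    and supp_bdd: "\<exists>c. \<forall>x\<in>supp_meas \<sigma>. \<bar>x\<bar> \<le> c \<and> 1 / \<bar>x\<bar> \<le> c"
    and s_gt: "\<And>a. \<bar>a\<bar> > 1 \<Longrightarrow> s a = 1"
    and s_lt: "\<And>a. \<bar>a\<bar> < 1 \<Longrightarrow> s a = -1"
    and C2_def: "\<And>u. u \<in> L2 \<mu> \<Longrightarrow> AE \<beta> in \<mu>. vp_exists \<sigma> s rh u \<beta>"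
    and C2_bdd: "bounded_op \<mu> (C2 \<sigma> s \<rho> rh)"
    and Gam_inv: "\<And>k t. op_invertible \<mu> (Gam \<sigma> s \<rho> rh k t)"
  shows "\<forall>k t. op_invertible \<mu> (gam \<sigma> s \<rho> rh k t)
     \<and> has_op_deriv \<mu> (gam \<sigma> s \<rho> rh k) (op_deriv \<mu> (gam \<sigma> s \<rho> rh k) t) t
     \<and> (\<exists>D. has_op_deriv \<mu>
              (\<lambda>t'. op_inv \<mu> (gam \<sigma> s \<rho> rh k t') \<circ>\<^sub>o op_deriv \<mu> (gam \<sigma> s \<rho> rh k) t') D t
          \<and> op_eq \<mu> D
              (op_diff (op_inv \<mu> (gam \<sigma> s \<rho> rh k t) \<circ>\<^sub>o gam \<sigma> s \<rho> rh (k + 1) t)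
                       (op_inv \<mu> (gam \<sigma> s \<rho> rh (k - 1) t) \<circ>\<^sub>o gam \<sigma> s \<rho> rh k t)))"
proof -
  obtain c where c: "\<forall>x\<in>supp_meas \<sigma>. \<bar>x\<bar> \<le> c \<and> 1 / \<bar>x\<bar> \<le> c" using supp_bdd by blast
  have "0 \<notin> supp_meas \<sigma>" using supp_inv by blast
  then interpret annular_measure \<mu> "max c 1"
    unfolding \<mu>_def by (rule annular_measure_mu_meas[OF sigma_borel _ c])
  interpret toda_family \<mu> "Gam \<sigma> s \<rho> rh" "mult_op (\<lambda>\<beta>. \<beta> + 1 / \<beta>)"
    unfolding Gam_eq_Gam_op using Gam_inv C2_bdd by (intro toda_family_Gam_op) (simp_all add: Gam_eq_Gam_op)
  have gam_eq: "gam \<sigma> s \<rho> rh = (\<lambda>k. log_deriv \<mu> (Gam \<sigma> s \<rho> rh k))"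
    by (simp add: fun_eq_iff gam_def log_deriv_def \<mu>_def)
  have log_deriv_eta: "(\<lambda>t. op_inv \<mu> (F t) \<circ>\<^sub>o op_deriv \<mu> F t) = log_deriv \<mu> F" for F
    by (simp add: fun_eq_iff log_deriv_def)
  show ?thesis unfolding gam_eq log_deriv_eta using toda_equation by blast
qed

end
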